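(* Let $L>0$, $0<\gamma<1$, $\alpha>0$, let $K\ge 1$ be an integer and $\Delta t>0$, and put $\beta=\Gamma(2-\gamma)\,\Delta t^{\gamma}$ and $b_j=(j+1)^{1-\gamma}-j^{1-\gamma}$ for $j\ge 0$. Let $y^0\in L^2(0,L)$ and $u^1,\dots,u^{K}\in L^2(0,L)$. Suppose $y^1,\dots,y^{K}\in H_0^2(0,L)$ have $y^{j}_{xxxx}\in L^2(0,L)$ and satisfy, for every $g\in H_0^2(0,L)$, $$\langle y^{1},g\rangle+\beta\alpha\langle y^{1}_{xxxx},g\rangle=\langle y^{0},g\rangle+\beta\langle u^{1},g\rangle,$$ and, for $p=1,\dots,K-1$, $$\langle y^{p+1},g\rangle+\beta\alpha\langle y^{p+1}_{xxxx},g\rangle=(1-b_1)\langle y^{p},g\rangle+\sum_{j=1}^{p-1}(b_j-b_{j+1})\langle y^{p-j},g\rangle+b_p\langle y^{0},g\rangle+\beta\langle u^{p+1},g\rangle .$$ Then, for every $\Delta t>0$ (unconditional stability), $$\|y^{p+1}\|_{2}\le \|y^{0}\|_{0}+\beta\sum_{j=1}^{p+1}\|u^{j}\|_{0},\qquad p=0,1,\dots,K-1.$$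
   Context: This is the time-semidiscretization (L1 / backward Euler approximation of the Caputo derivative) of the fourth-order time-fractional equation $\partial_t^\gamma y+\alpha\,\partial_x^4 y=u(x,t)$ on $[0,L]\times[0,T]$. Here $\langle f,g\rangle=\int_0^L fg\,dx$ and $\|g\|_0=\langle g,g\rangle^{1/2}$ is the $L^2(0,L)$ norm. $H^2(0,L)=\{g\in L^2(0,L): g_x,g_{xx}\in L^2(0,L)\}$ and $H_0^2(0,L)=\{g\in H^2(0,L): g=0 \text{ and } g_x=0 \text{ at } x=0,L\}$. The norm $\|\cdot\|_2$ is defined by $\|g\|_2=\big(\|g\|_0^2+\beta\alpha\|g_{xx}\|_0^2\big)^{1/2}$. An empty sum (when $p=1$) is zero. *)

theory Defs
  imports "HOL-Analysis.Analysis"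
begin

text \<open>Functions on (0,L) are represented by their real-valued representatives;
  integrals are Lebesgue integrals over [0,L].\<close>

definition L2 :: "real \<Rightarrow> (real \<Rightarrow> real) \<Rightarrow> bool" where
  "L2 L f \<longleftrightarrow> f \<in> borel_measurable (lebesgue_on {0..L})
      \<and> integrable (lebesgue_on {0..L}) (\<lambda>x. (f x)^2)"

definition ip :: "real \<Rightarrow> (real \<Rightarrow> real) \<Rightarrow> (real \<Rightarrow> real) \<Rightarrow> real" where
  "ip L f g = (\<integral>x. f x * g x \<partial>(lebesgue_on {0..L}))"

definition norm0 :: "real \<Rightarrow> (real \<Rightarrow> real) \<Rightarrow> real" where
  "norm0 L g = sqrt (ip L g g)"

definition norm2 :: "real \<Rightarrow> real \<Rightarrow> real \<Rightarrow> (real \<Rightarrow> real) \<Rightarrow> (real \<Rightarrow> real) \<Rightarrow> real" where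
  "norm2 L \<beta> \<alpha> g gxx = sqrt ((norm0 L g)^2 + \<beta> * \<alpha> * (norm0 L gxx)^2)"

definition smooth_fun :: "(real \<Rightarrow> real) \<Rightarrow> bool" where
  "smooth_fun \<phi> \<longleftrightarrow> (\<forall>n x. ((deriv ^^ n) \<phi>) differentiable (at x))"

definition test_fun :: "real \<Rightarrow> (real \<Rightarrow> real) \<Rightarrow> bool" where
  "test_fun L \<phi> \<longleftrightarrow> smooth_fun \<phi> \<and>
     (\<exists>a b. 0 < a \<and> a \<le> b \<and> b < L \<and> (\<forall>x. x \<notin> {a..b} \<longrightarrow> \<phi> x = 0))"

definition loc_int :: "real \<Rightarrow> (real \<Rightarrow> real) \<Rightarrow> bool" where
  "loc_int L f \<longleftrightarrow> (\<forall>a b. 0 < a \<longrightarrow> b < L \<longrightarrow> integrable (lebesgue_on {a..b}) f)"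

definition weak_deriv :: "real \<Rightarrow> (real \<Rightarrow> real) \<Rightarrow> (real \<Rightarrow> real) \<Rightarrow> bool" where
  "weak_deriv L f f' \<longleftrightarrow> loc_int L f \<and> loc_int L f' \<and>
     (\<forall>\<phi>. test_fun L \<phi> \<longrightarrow>
        (\<integral>x. f x * deriv \<phi> x \<partial>(lebesgue_on {0..L})) = - (\<integral>x. f' x * \<phi> x \<partial>(lebesgue_on {0..L})))"

definition is_H2 :: "real \<Rightarrow> (real \<Rightarrow> real) \<Rightarrow> (real \<Rightarrow> real) \<Rightarrow> (real \<Rightarrow> real) \<Rightarrow> bool" where
  "is_H2 L g g1 g2 \<longleftrightarrow> L2 L g \<and> L2 L g1 \<and> L2 L g2 \<and> weak_deriv L g g1 \<and> weak_deriv L g1 g2"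

text \<open>g \<in> H_0^2(0,L): g and g_x vanish at 0 and L, evaluated on their
  continuous representatives (the traces).\<close>
definition is_H02 :: "real \<Rightarrow> (real \<Rightarrow> real) \<Rightarrow> (real \<Rightarrow> real) \<Rightarrow> (real \<Rightarrow> real) \<Rightarrow> bool" where
  "is_H02 L g g1 g2 \<longleftrightarrow> is_H2 L g g1 g2 \<and>
     (\<exists>G G1. continuous_on {0..L} G \<and> continuous_on {0..L} G1 \<and>
        (AE x in lebesgue_on {0..L}. G x = g x) \<and> (AE x in lebesgue_on {0..L}. G1 x = g1 x) \<and>
        G 0 = 0 \<and> G L = 0 \<and> G1 0 = 0 \<and> G1 L = 0)"

definition H02 :: "real \<Rightarrow> (real \<Rightarrow> real) set" where
  "H02 L = {g. \<exists>g1 g2. is_H02 L g g1 g2}"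

end

theory Submission
  imports Defs "HOL-Computational_Algebra.Polynomial"
begin

(* Testing the scheme with g = y^n itself turns its left-hand side into ||y^n||_2^2, because
   <y_xxxx, y> = ||y_xx||_0^2 for y in H_0^2. Since the L1 weights b_j decrease from b_0 = 1,
   the memory terms on the right form a convex combination of <y^k, y^n>, k < n; Cauchy-Schwarz
   and induction on n bound the right-hand side by (||y^0||_0 + beta sum_j ||u^j||_0) ||y^n||_0,
   and ||y^n||_0 <= ||y^n||_2 gives the estimate, whatever the time step.
   The identity for <y_xxxx, y> needs absolutely continuous representatives: by the
   du Bois-Reymond lemma a function whose weak derivative is integrable differs from a primitive
   of it by a constant almost everywhere, after which two integrations by parts apply. *)

section \<open>Smooth functions and a smooth step\<close>

definition differentiable_upto :: "nat \<Rightarrow> (real \<Rightarrow> real) \<Rightarrow> bool" where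
  "differentiable_upto n f \<longleftrightarrow> (\<forall>k<n. \<forall>x. (deriv ^^ k) f differentiable (at x))"

lemma smooth_fun_iff_differentiable_upto: "smooth_fun f \<longleftrightarrow> (\<forall>n. differentiable_upto n f)"
  unfolding smooth_fun_def differentiable_upto_def by (meson lessI)

lemma differentiable_upto_0 [simp]: "differentiable_upto 0 f"
  by (simp add: differentiable_upto_def)

lemma differentiable_upto_Suc:
  "differentiable_upto (Suc n) f \<longleftrightarrow> (\<forall>x. f differentiable (at x)) \<and> differentiable_upto n (deriv f)"
proof -
  have "(deriv ^^ Suc k) f = (deriv ^^ k) (deriv f)" for k
    by (simp add: funpow_Suc_right del: funpow.simps)
  then show ?thesis
    unfolding differentiable_upto_def
    by (metis (no_types, lifting) Suc_less_eq funpow_0 less_Suc_eq_0_disj zero_less_Suc)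
qed

lemma differentiable_upto_SucD: "differentiable_upto (Suc n) f \<Longrightarrow> differentiable_upto n f"
  by (simp add: differentiable_upto_def)

lemma deriv_eq_if_has_real_derivative:
  "(\<And>x. (f has_real_derivative f' x) (at x)) \<Longrightarrow> deriv f = f'"
  using DERIV_imp_deriv by blast

lemma differentiable_upto_derivI:
  assumes "\<And>x. (f has_real_derivative f' x) (at x)" "differentiable_upto n f'"
  shows "differentiable_upto (Suc n) f"
  using assms deriv_eq_if_has_real_derivative[of f f']
  by (auto simp: differentiable_upto_Suc real_differentiable_def)

lemma differentiable_upto_const: "differentiable_upto n (\<lambda>x. c)"
  by (induction n arbitrary: c) (auto intro!: differentiable_upto_derivI[where f'="\<lambda>x. 0"])

lemma differentiable_upto_add:
  "differentiable_upto n f \<Longrightarrow> differentiable_upto n g \<Longrightarrow> differentiable_upto n (\<lambda>x. f x + g x)"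
proof (induction n arbitrary: f g)
  case (Suc n)
  then have "(f has_real_derivative deriv f x) (at x)" "(g has_real_derivative deriv g x) (at x)" for x
    by (auto simp: differentiable_upto_Suc DERIV_deriv_iff_real_differentiable)
  then show ?case
    using Suc by (intro differentiable_upto_derivI[where f'="\<lambda>x. deriv f x + deriv g x"])
      (auto intro!: derivative_eq_intros simp: differentiable_upto_Suc)
qed simp

lemma differentiable_upto_mult:
  "differentiable_upto n f \<Longrightarrow> differentiable_upto n g \<Longrightarrow> differentiable_upto n (\<lambda>x. f x * g x)"
proof (induction n arbitrary: f g)
  case (Suc n)
  then have "(f has_real_derivative deriv f x) (at x)" "(g has_real_derivative deriv g x) (at x)" for x
    by (auto simp: differentiable_upto_Suc DERIV_deriv_iff_real_differentiable)
  moreover have "differentiable_upto n (\<lambda>x. deriv f x * g x + f x * deriv g x)"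
    using Suc differentiable_upto_SucD
    by (intro differentiable_upto_add Suc.IH) (auto simp: differentiable_upto_Suc)
  ultimately show ?case
    by (intro differentiable_upto_derivI[where f'="\<lambda>x. deriv f x * g x + f x * deriv g x"])
      (auto intro!: derivative_eq_intros)
qed simp

lemma differentiable_upto_affine:
  "differentiable_upto n f \<Longrightarrow> differentiable_upto n (\<lambda>x. f (a * x + c))"
proof (induction n arbitrary: f)
  case (Suc n)
  then have "\<And>x. f differentiable (at x)" by (auto simp: differentiable_upto_Suc)
  then have "((\<lambda>x. f (a * x + c)) has_real_derivative deriv f (a * x + c) * a) (at x)" for x
    by (intro DERIV_chain2[of f]) (auto simp: DERIV_deriv_iff_real_differentiable intro!: derivative_eq_intros)
  moreover have "differentiable_upto n (\<lambda>x. deriv f (a * x + c) * a)"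
    using Suc by (intro differentiable_upto_mult differentiable_upto_const)
      (auto simp: differentiable_upto_Suc)
  ultimately show ?case by (rule differentiable_upto_derivI)
qed simp

lemma smooth_fun_const: "smooth_fun (\<lambda>x. c)"
  by (simp add: smooth_fun_iff_differentiable_upto differentiable_upto_const)

lemma smooth_fun_add: "smooth_fun f \<Longrightarrow> smooth_fun g \<Longrightarrow> smooth_fun (\<lambda>x. f x + g x)"
  by (simp add: smooth_fun_iff_differentiable_upto differentiable_upto_add)

lemma smooth_fun_mult: "smooth_fun f \<Longrightarrow> smooth_fun g \<Longrightarrow> smooth_fun (\<lambda>x. f x * g x)"
  by (simp add: smooth_fun_iff_differentiable_upto differentiable_upto_mult)

lemma smooth_fun_cmult: "smooth_fun f \<Longrightarrow> smooth_fun (\<lambda>x. c * f x)"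
  by (rule smooth_fun_mult[OF smooth_fun_const])

lemma smooth_fun_diff: "smooth_fun f \<Longrightarrow> smooth_fun g \<Longrightarrow> smooth_fun (\<lambda>x. f x - g x)"
  using smooth_fun_add[of f "\<lambda>x. (-1) * g x"] smooth_fun_cmult[of g "-1"] by simp

lemma smooth_fun_affine: "smooth_fun f \<Longrightarrow> smooth_fun (\<lambda>x. f (a * x + c))"
  by (simp add: smooth_fun_iff_differentiable_upto differentiable_upto_affine)

lemma smooth_fun_antiderivI:
  "(\<And>x. (F has_real_derivative f x) (at x)) \<Longrightarrow> smooth_fun f \<Longrightarrow> smooth_fun F"
  unfolding smooth_fun_iff_differentiable_upto
  by (metis differentiable_upto_derivI differentiable_upto_SucD)

lemma smooth_fun_has_real_derivative:
  "smooth_fun f \<Longrightarrow> (f has_real_derivative deriv f x) (at x)"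
  by (metis DERIV_deriv_iff_real_differentiable funpow_0 smooth_fun_def)

lemma smooth_fun_deriv: "smooth_fun f \<Longrightarrow> smooth_fun (deriv f)"
  unfolding smooth_fun_iff_differentiable_upto by (metis differentiable_upto_Suc)

lemma smooth_fun_continuous_on: "smooth_fun f \<Longrightarrow> continuous_on S f"
  by (meson DERIV_isCont continuous_at_imp_continuous_on smooth_fun_has_real_derivative)

lemma poly_over_exp_tendsto_0: "((\<lambda>t. poly P t / exp t) \<longlongrightarrow> (0::real)) at_top"
proof -
  have "poly P t / exp t = (\<Sum>i\<le>degree P. coeff P i * (t ^ i / exp t))" for t::real
    by (simp add: poly_altdef sum_divide_distrib)
  moreover have "((\<lambda>t. \<Sum>i\<le>degree P. coeff P i * (t ^ i / exp t)) \<longlongrightarrow> (\<Sum>i\<le>degree P. coeff P i * (0::real))) at_top"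
    by (intro tendsto_sum tendsto_mult tendsto_const tendsto_power_div_exp_0)
  ultimately show ?thesis by simp
qed

text \<open>The functions \<open>P(1/x) e^(-1/x)\<close>, extended by \<open>0\<close> to \<open>x \<le> 0\<close>, form a family closed
  under differentiation; \<open>flat_exp 1\<close> is the classical smooth, non-analytic cutoff.\<close>

definition flat_exp :: "real poly \<Rightarrow> real \<Rightarrow> real" where
  "flat_exp P x = (if x > 0 then poly P (1/x) * exp (-1/x) else 0)"

definition flat_exp_deriv_poly :: "real poly \<Rightarrow> real poly" where
  "flat_exp_deriv_poly P = [:0,0,1:] * (P - pderiv P)"

lemma flat_exp_has_real_derivative_pos:
  assumes "x > 0"
  shows "((\<lambda>x. poly P (1/x) * exp (-1/x)) has_real_derivative flat_exp (flat_exp_deriv_poly P) x) (at x)"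
proof -
  have "((\<lambda>x. poly P (1/x) * exp (-1/x)) has_real_derivative
        poly (pderiv P) (1/x) * (- 1 / x^2) * exp (-1/x) + poly P (1/x) * (exp (-1/x) * (1 / x^2))) (at x)"
    using assms
    by (auto intro!: derivative_eq_intros DERIV_chain2[OF poly_DERIV] simp: power2_eq_square)
  moreover have "poly (pderiv P) (1/x) * (- 1 / x^2) * exp (-1/x) + poly P (1/x) * (exp (-1/x) * (1 / x^2))
      = flat_exp (flat_exp_deriv_poly P) x"
    using assms by (simp add: flat_exp_def flat_exp_deriv_poly_def algebra_simps power2_eq_square divide_simps)
  ultimately show ?thesis by simp
qed

lemma flat_exp_has_real_derivative_0: "(flat_exp P has_real_derivative 0) (at 0)"
proof -
  have "((\<lambda>y. (flat_exp P y - flat_exp P 0) / (y - 0)) \<longlongrightarrow> 0) (at (0::real))"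
  proof (rule filterlim_split_at)
    have "\<forall>\<^sub>F y in at_left (0::real). y < 0"
      by (auto simp: eventually_at_left_field intro!: exI[of _ "-1"])
    then have "\<forall>\<^sub>F y in at_left (0::real). (flat_exp P y - flat_exp P 0) / (y - 0) = 0"
      by eventually_elim (simp add: flat_exp_def)
    then show "((\<lambda>y. (flat_exp P y - flat_exp P 0) / (y - 0)) \<longlongrightarrow> 0) (at_left (0::real))"
      by (rule tendsto_eventually)
    have "((\<lambda>y. poly (pCons 0 P) (inverse y) / exp (inverse y)) \<longlongrightarrow> 0) (at_right (0::real))"
      by (rule filterlim_compose[OF poly_over_exp_tendsto_0 filterlim_inverse_at_top_right])
    moreover have "\<forall>\<^sub>F y in at_right 0.
        poly (pCons 0 P) (inverse y) / exp (inverse y) = (flat_exp P y - flat_exp P 0) / (y - 0)"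
      using eventually_at_right_less[of "0::real"]
      by eventually_elim (auto simp: flat_exp_def exp_minus field_simps)
    ultimately show "((\<lambda>y. (flat_exp P y - flat_exp P 0) / (y - 0)) \<longlongrightarrow> 0) (at_right (0::real))"
      by (rule tendsto_cong[THEN iffD1, rotated])
  qed
  then show ?thesis by (simp add: has_field_derivative_iff)
qed

lemma flat_exp_has_real_derivative:
  "(flat_exp P has_real_derivative flat_exp (flat_exp_deriv_poly P) x) (at x)"
proof -
  consider "x > 0" | "x < 0" | "x = 0" by linarith
  then show ?thesis
  proof cases
    case 1
    show ?thesis
      by (rule has_field_derivative_transform_within_open[where S="{0<..}",
            OF flat_exp_has_real_derivative_pos[OF 1]]) (use 1 in \<open>auto simp: flat_exp_def\<close>)
  next
    case 2
    have "((\<lambda>_. 0) has_real_derivative flat_exp (flat_exp_deriv_poly P) x) (at x)"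
      using 2 by (simp add: flat_exp_def)
    then show ?thesis
      by (rule has_field_derivative_transform_within_open[where S="{..<0}"])
        (use 2 in \<open>auto simp: flat_exp_def\<close>)
  next
    case 3
    then show ?thesis using flat_exp_has_real_derivative_0 by (simp add: flat_exp_def)
  qed
qed

lemma smooth_fun_flat_exp: "smooth_fun (flat_exp P)"
proof -
  have "differentiable_upto n (flat_exp P)" for n
  proof (induction n arbitrary: P)
    case (Suc n)
    show ?case by (rule differentiable_upto_derivI[OF flat_exp_has_real_derivative Suc.IH])
  qed simp
  then show ?thesis by (simp add: smooth_fun_iff_differentiable_upto)
qed

lemma flat_exp_eq_0: "x \<le> 0 \<Longrightarrow> flat_exp P x = 0"
  by (simp add: flat_exp_def)

lemma flat_exp_1_pos: "x > 0 \<Longrightarrow> flat_exp 1 x > 0"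
  by (simp add: flat_exp_def)

lemma flat_exp_1_nonneg: "flat_exp 1 x \<ge> 0"
  by (simp add: flat_exp_def)

definition bump :: "real \<Rightarrow> real" where
  "bump x = flat_exp 1 x * flat_exp 1 (1 - x)"

lemma smooth_fun_bump: "smooth_fun bump"
proof -
  have "smooth_fun (\<lambda>x. flat_exp 1 ((-1) * x + 1))"
    by (rule smooth_fun_affine[OF smooth_fun_flat_exp])
  then have "smooth_fun (\<lambda>x. flat_exp 1 (1 - x))" by simp
  then show ?thesis unfolding bump_def[abs_def] by (intro smooth_fun_mult smooth_fun_flat_exp)
qed

lemma bump_nonneg: "bump x \<ge> 0"
  by (simp add: bump_def flat_exp_1_nonneg)

lemma bump_eq_0: "x \<le> 0 \<or> x \<ge> 1 \<Longrightarrow> bump x = 0"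
  by (auto simp: bump_def flat_exp_eq_0)

lemma bump_pos: "0 < x \<Longrightarrow> x < 1 \<Longrightarrow> bump x > 0"
  by (simp add: bump_def flat_exp_1_pos)

lemma integral_zero_if_zero_on: "(\<And>x. x \<in> S \<Longrightarrow> f x = 0) \<Longrightarrow> integral S f = (0::real)"
  by (metis (mono_tags, lifting) Henstock_Kurzweil_Integration.integral_cong integral_0)

lemma integral_pos_if_continuous:
  fixes f :: "real \<Rightarrow> real"
  assumes "continuous_on {a..b} f" "\<And>x. x \<in> {a..b} \<Longrightarrow> f x \<ge> 0" "x0 \<in> {a..b}" "f x0 > 0" "a < b"
  shows "integral {a..b} f > 0"
proof -
  have "integral {a..b} f \<ge> 0"
    using assms by (intro Henstock_Kurzweil_Integration.integral_nonneg integrable_continuous_interval) auto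
  moreover have "integral {a..b} f \<noteq> 0"
    using integral_eq_0_iff[of a b f] assms by auto
  ultimately show ?thesis by simp
qed

lemma has_real_derivative_integral_from_zero_tail:
  fixes f :: "real \<Rightarrow> real"
  assumes f: "continuous_on UNIV f" and vanish: "\<And>t. t \<le> c \<Longrightarrow> f t = 0"
  shows "((\<lambda>u. integral {c..u} f) has_real_derivative f x) (at x)"
proof -
  define c' where "c' = min c (x - 1)"
  have "integral {c'..u} f = integral {c..u} f" for u
  proof (cases "u \<le> c")
    case True
    then show ?thesis
      by (subst integral_zero_if_zero_on[of "{c'..u}"], simp add: vanish,
          subst integral_zero_if_zero_on, auto simp: vanish)
  next
    case False
    have "integral {c'..c} f + integral {c..u} f = integral {c'..u} f"
      by (rule Henstock_Kurzweil_Integration.integral_combine)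
        (use False in \<open>auto simp: c'_def intro!: integrable_continuous_interval continuous_on_subset[OF f]\<close>)
    moreover have "integral {c'..c} f = 0" by (rule integral_zero_if_zero_on) (auto simp: vanish)
    ultimately show ?thesis by simp
  qed
  moreover have "((\<lambda>u. integral {c'..u} f) has_vector_derivative f x) (at x within {c'..x+1})"
    by (rule integral_has_vector_derivative) (auto simp: c'_def intro!: continuous_on_subset[OF f])
  moreover have "at x within {c'..x+1} = at x"
    by (rule at_within_Icc_at) (auto simp: c'_def)
  ultimately show ?thesis
    by (simp add: has_real_derivative_iff_has_vector_derivative)
qed

definition smooth_step :: "real \<Rightarrow> real" where
  "smooth_step x = integral {0..x} bump / integral {0..1} bump"

lemma bump_integral_pos: "integral {0..1} bump > 0"
  by (rule integral_pos_if_continuous[of 0 1 bump "1/2"])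
    (auto simp: smooth_fun_continuous_on[OF smooth_fun_bump] bump_nonneg bump_pos)

lemma smooth_step_has_real_derivative:
  "(smooth_step has_real_derivative bump x / integral {0..1} bump) (at x)"
  unfolding smooth_step_def[abs_def]
  by (intro DERIV_cdivide has_real_derivative_integral_from_zero_tail
      smooth_fun_continuous_on[OF smooth_fun_bump]) (auto simp: bump_eq_0)

lemma smooth_fun_smooth_step: "smooth_fun smooth_step"
proof (rule smooth_fun_antiderivI)
  show "(smooth_step has_real_derivative (1 / integral {0..1} bump) * bump x) (at x)" for x
    using smooth_step_has_real_derivative by simp
  show "smooth_fun (\<lambda>x. (1 / integral {0..1} bump) * bump x)"
    by (rule smooth_fun_cmult[OF smooth_fun_bump])
qed

lemma smooth_step_eq_0: "x \<le> 0 \<Longrightarrow> smooth_step x = 0"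
  unfolding smooth_step_def by (subst integral_zero_if_zero_on) (auto simp: bump_eq_0)

lemma smooth_step_eq_1: "x \<ge> 1 \<Longrightarrow> smooth_step x = 1"
proof -
  assume x: "x \<ge> 1"
  have "integral {0..1} bump + integral {1..x} bump = integral {0..x} bump"
    by (rule Henstock_Kurzweil_Integration.integral_combine)
      (use x in \<open>auto intro!: integrable_continuous_interval smooth_fun_continuous_on[OF smooth_fun_bump]\<close>)
  moreover have "integral {1..x} bump = 0" by (rule integral_zero_if_zero_on) (auto simp: bump_eq_0)
  ultimately show ?thesis using bump_integral_pos by (simp add: smooth_step_def)
qed

lemma smooth_step_mono: "x \<le> y \<Longrightarrow> smooth_step x \<le> smooth_step y"
  by (rule DERIV_nonneg_imp_nondecreasing[of x y smooth_step])
    (use smooth_step_has_real_derivative bump_nonneg bump_integral_pos in \<open>auto intro!: exI\<close>)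

lemma smooth_step_nonneg: "0 \<le> smooth_step x"
  using smooth_step_mono[of "min x 0" x] smooth_step_eq_0[of "min x 0"] by simp

lemma smooth_step_le_1: "smooth_step x \<le> 1"
  using smooth_step_mono[of x "max x 1"] smooth_step_eq_1[of "max x 1"] by simp
section \<open>The du Bois-Reymond lemma\<close>

lemma integrable_lebesgue_on_iff:
  fixes f :: "real \<Rightarrow> real"
  shows "integrable (lebesgue_on {a..b}) f \<longleftrightarrow> f absolutely_integrable_on {a..b}"
proof -
  have S: "{a..b} \<in> sets lebesgue" by simp
  show ?thesis
    unfolding set_integrable_def using integrable_restrict_space[of "{a..b}" lebesgue f] S by simp
qed

lemma absolutely_integrable_mult_continuous:
  fixes f g :: "real \<Rightarrow> real"
  assumes "f absolutely_integrable_on {a..b}" "continuous_on {a..b} g"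
  shows "(\<lambda>x. f x * g x) absolutely_integrable_on {a..b}"
proof -
  have "(\<lambda>x. g x * f x) absolutely_integrable_on {a..b}"
  proof (rule absolutely_integrable_bounded_measurable_product_real)
    show "g \<in> borel_measurable (lebesgue_on {a..b})"
      by (rule continuous_imp_measurable_on_sets_lebesgue) (use assms in auto)
    show "bounded (g ` {a..b})"
      by (intro compact_imp_bounded compact_continuous_image assms) auto
  qed (use assms in auto)
  then show ?thesis by (simp add: mult.commute)
qed

lemma absolutely_integrable_zero_outside:
  fixes F :: "real \<Rightarrow> real"
  assumes F: "F absolutely_integrable_on {a..b}" and sub: "{a..b} \<subseteq> {c..d}"
    and vanish: "\<And>x. x \<notin> {a..b} \<Longrightarrow> F x = 0"
  shows "F absolutely_integrable_on {c..d}" "integrable (lebesgue_on {c..d}) F"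
    "(\<integral>x. F x \<partial>lebesgue_on {c..d}) = integral {a..b} F" "integral {c..d} F = integral {a..b} F"
proof -
  have restrict_ab: "(\<lambda>x. if x \<in> {a..b} then F x else 0) = F" using vanish by auto
  have restrict_cd: "(\<lambda>x. if x \<in> {c..d} then F x else 0) = F" using sub vanish by fastforce
  have "F absolutely_integrable_on UNIV"
    using F absolutely_integrable_restrict_UNIV[of "{a..b}" F] unfolding restrict_ab by simp
  then show cd: "F absolutely_integrable_on {c..d}"
    by (rule absolutely_integrable_on_subinterval) auto
  then show I: "integrable (lebesgue_on {c..d}) F" by (simp add: integrable_lebesgue_on_iff)
  have "integral {c..d} F = integral UNIV F"
    using integral_restrict_UNIV[of "{c..d}" F] unfolding restrict_cd by simp
  also have "\<dots> = integral {a..b} F"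
    using integral_restrict_UNIV[of "{a..b}" F] unfolding restrict_ab by simp
  finally show "integral {c..d} F = integral {a..b} F" .
  then show "(\<integral>x. F x \<partial>lebesgue_on {c..d}) = integral {a..b} F"
    by (simp add: lebesgue_integral_eq_integral I)
qed

lemma loc_int_mult_compact_support:
  fixes k g :: "real \<Rightarrow> real"
  assumes "loc_int L k" "0 < a" "b < L" "continuous_on UNIV g" "\<And>x. x \<notin> {a..b} \<Longrightarrow> g x = 0"
  shows "(\<lambda>x. k x * g x) absolutely_integrable_on {0..L}"
    "integrable (lebesgue_on {0..L}) (\<lambda>x. k x * g x)"
    "(\<integral>x. k x * g x \<partial>lebesgue_on {0..L}) = integral {0..L} (\<lambda>x. k x * g x)"
    "integral {0..L} (\<lambda>x. k x * g x) = integral {a..b} (\<lambda>x. k x * g x)"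
proof -
  have "k absolutely_integrable_on {a..b}"
    using assms(1-3) unfolding loc_int_def integrable_lebesgue_on_iff by blast
  then have kg: "(\<lambda>x. k x * g x) absolutely_integrable_on {a..b}"
    by (rule absolutely_integrable_mult_continuous) (rule continuous_on_subset[OF assms(4)], simp)
  have "{a..b} \<subseteq> {0..L}" using assms by auto
  from absolutely_integrable_zero_outside[OF kg this] assms(5)
  show "(\<lambda>x. k x * g x) absolutely_integrable_on {0..L}"
    "integrable (lebesgue_on {0..L}) (\<lambda>x. k x * g x)"
    "(\<integral>x. k x * g x \<partial>lebesgue_on {0..L}) = integral {0..L} (\<lambda>x. k x * g x)"
    "integral {0..L} (\<lambda>x. k x * g x) = integral {a..b} (\<lambda>x. k x * g x)"
    by auto
qed

lemma test_funI:
  "smooth_fun \<phi> \<Longrightarrow> 0 < a \<Longrightarrow> a \<le> b \<Longrightarrow> b < L \<Longrightarrow> (\<And>x. x \<notin> {a..b} \<Longrightarrow> \<phi> x = 0) \<Longrightarrow> test_fun L \<phi>"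
  unfolding test_fun_def by blast

lemma test_funE:
  fixes \<phi> :: "real \<Rightarrow> real"
  assumes "test_fun L \<phi>"
  obtains a b :: real where "smooth_fun \<phi>" "0 < a" "a \<le> b" "b < L"
    "\<And>x. x \<notin> {a..b} \<Longrightarrow> \<phi> x = 0" "\<And>x. x \<notin> {a..b} \<Longrightarrow> deriv \<phi> x = 0"
proof -
  from assms obtain a b where \<phi>: "smooth_fun \<phi>" and ab: "0 < a" "a \<le> b" "b < L"
    and vanish: "\<And>x. x \<notin> {a..b} \<Longrightarrow> \<phi> x = 0"
    unfolding test_fun_def by blast
  have "deriv \<phi> x = 0" if x: "x \<notin> {a..b}" for x
  proof -
    have "(\<phi> has_real_derivative 0) (at x)"
    proof (cases "x < a")
      case True
      show ?thesis
        by (rule has_field_derivative_transform_within_open[OF DERIV_const[of 0], where S="{..<a}"])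
          (use True vanish in auto)
    next
      case False
      show ?thesis
        by (rule has_field_derivative_transform_within_open[OF DERIV_const[of 0], where S="{b<..}"])
          (use False x vanish in auto)
    qed
    then show ?thesis by (rule DERIV_imp_deriv)
  qed
  with that \<phi> ab vanish show ?thesis by blast
qed

locale vanishing_weak_deriv =
  fixes L :: real and k :: "real \<Rightarrow> real"
  assumes L_pos: "L > 0" and k_loc_int: "loc_int L k"
    and k_orthogonal: "\<And>\<phi>. test_fun L \<phi> \<Longrightarrow> (\<integral>x. k x * deriv \<phi> x \<partial>lebesgue_on {0..L}) = 0"
begin

definition mid_bump :: "real \<Rightarrow> real" where
  "mid_bump x = bump ((2/L) * x + (-1/2))"

lemma smooth_fun_mid_bump: "smooth_fun mid_bump"
  unfolding mid_bump_def[abs_def] by (rule smooth_fun_affine[OF smooth_fun_bump])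

lemma mid_bump_eq_0: "x \<notin> {L/4..3*L/4} \<Longrightarrow> mid_bump x = 0"
proof -
  assume "x \<notin> {L/4..3*L/4}"
  then have "(2/L) * x + (-1/2) \<le> 0 \<or> (2/L) * x + (-1/2) \<ge> 1"
    using L_pos by (auto simp: field_simps)
  then show ?thesis unfolding mid_bump_def by (rule bump_eq_0)
qed

lemma mid_bump_integral_pos: "integral {0..L} mid_bump > 0"
proof (rule integral_pos_if_continuous[of 0 L mid_bump "L/2"])
  show "continuous_on {0..L} mid_bump" by (rule smooth_fun_continuous_on[OF smooth_fun_mid_bump])
  show "0 < mid_bump (L/2)" unfolding mid_bump_def using L_pos by (intro bump_pos) auto
qed (use L_pos in \<open>auto simp: mid_bump_def bump_nonneg\<close>)

definition k_avg :: real where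
  "k_avg = integral {0..L} (\<lambda>x. k x * mid_bump x) / integral {0..L} mid_bump"

text \<open>Subtracting a multiple of \<open>mid_bump\<close> turns \<open>\<rho>\<close> into a function of integral zero,
  which is the derivative of a test function.\<close>

lemma integral_mult_test_fun:
  assumes "test_fun L \<rho>"
  shows "integral {0..L} (\<lambda>x. k x * \<rho> x) = integral {0..L} \<rho> * k_avg"
proof -
  obtain a b where \<rho>: "smooth_fun \<rho>" and ab: "0 < a" "a \<le> b" "b < L"
    and \<rho>_vanish: "\<And>x. x \<notin> {a..b} \<Longrightarrow> \<rho> x = 0"
    using assms by (rule test_funE) blast
  define c where "c = integral {0..L} \<rho> / integral {0..L} mid_bump"
  define r where "r x = \<rho> x - c * mid_bump x" for x
  define a' where "a' = min a (L/4)"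
  define b' where "b' = max b (3*L/4)"
  have ab': "0 < a'" "a' \<le> b'" "b' < L" using ab L_pos by (auto simp: a'_def b'_def)
  have r_vanish: "r x = 0" if "x \<notin> {a'..b'}" for x
  proof -
    have "x \<notin> {a..b}" "x \<notin> {L/4..3*L/4}" using that by (auto simp: a'_def b'_def)
    then show ?thesis by (simp add: r_def \<rho>_vanish mid_bump_eq_0)
  qed
  have r: "smooth_fun r"
    unfolding r_def[abs_def] by (intro smooth_fun_diff smooth_fun_cmult \<rho> smooth_fun_mid_bump)
  then have r_cont: "continuous_on S r" for S by (rule smooth_fun_continuous_on)
  have int_r: "integral {0..L} r = 0"
  proof -
    have "integral {0..L} r = integral {0..L} \<rho> - integral {0..L} (\<lambda>x. c * mid_bump x)"
      unfolding r_def
      by (intro Henstock_Kurzweil_Integration.integral_diff integrable_on_mult_right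
          integrable_continuous_interval smooth_fun_continuous_on \<rho> smooth_fun_mid_bump)
    then show ?thesis using mid_bump_integral_pos by (simp add: c_def)
  qed
  define \<psi> where "\<psi> x = integral {0..x} r" for x
  have \<psi>_deriv: "(\<psi> has_real_derivative r x) (at x)" for x
    unfolding \<psi>_def[abs_def]
    by (rule has_real_derivative_integral_from_zero_tail[OF r_cont]) (use r_vanish ab' in auto)
  have \<psi>_vanish: "\<psi> x = 0" if "x \<notin> {a'..b'}" for x
  proof (cases "x < a'")
    case True
    then show ?thesis unfolding \<psi>_def by (intro integral_zero_if_zero_on r_vanish) auto
  next
    case False
    with that have "{a'..b'} \<subseteq> {0..x}" "{a'..b'} \<subseteq> {0..L}" using ab' by auto
    with absolutely_integrable_zero_outside(4)[OF absolutely_integrable_continuous_real[OF r_cont]]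
    show ?thesis using int_r r_vanish by (metis \<psi>_def)
  qed
  have "test_fun L \<psi>"
    using smooth_fun_antiderivI[OF \<psi>_deriv r] ab' \<psi>_vanish by (rule test_funI)
  then have "0 = (\<integral>x. k x * r x \<partial>lebesgue_on {0..L})"
    using k_orthogonal[of \<psi>] deriv_eq_if_has_real_derivative[OF \<psi>_deriv] by simp
  also have "\<dots> = integral {0..L} (\<lambda>x. k x * \<rho> x - c * (k x * mid_bump x))"
    using loc_int_mult_compact_support(3)[OF k_loc_int ab'(1,3) r_cont r_vanish]
    by (simp add: r_def algebra_simps)
  also have "\<dots> = integral {0..L} (\<lambda>x. k x * \<rho> x) - c * integral {0..L} (\<lambda>x. k x * mid_bump x)"
  proof -
    have "L/4 > 0" "3*L/4 < L" using L_pos by simp_all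
    from loc_int_mult_compact_support(1)[OF k_loc_int this
        smooth_fun_continuous_on[OF smooth_fun_mid_bump] mid_bump_eq_0]
    have "(\<lambda>x. k x * mid_bump x) integrable_on {0..L}"
      by (rule set_lebesgue_integral_eq_integral(1))
    moreover have "(\<lambda>x. k x * \<rho> x) integrable_on {0..L}"
      using loc_int_mult_compact_support(1)[OF k_loc_int ab(1,3) smooth_fun_continuous_on[OF \<rho>] \<rho>_vanish]
        set_lebesgue_integral_eq_integral(1) by blast
    ultimately show ?thesis
      by (simp add: Henstock_Kurzweil_Integration.integral_diff integrable_on_mult_right)
  qed
  finally show ?thesis using mid_bump_integral_pos by (simp add: c_def k_avg_def)
qed

end

definition smooth_indicator :: "real \<Rightarrow> real \<Rightarrow> real \<Rightarrow> real \<Rightarrow> real" where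
  "smooth_indicator c d \<epsilon> x = smooth_step ((x - c) / \<epsilon>) - smooth_step ((x - d) / \<epsilon>)"

lemma smooth_fun_smooth_indicator: "smooth_fun (smooth_indicator c d \<epsilon>)"
proof -
  have "smooth_fun (\<lambda>x. smooth_step ((1/\<epsilon>) * x + (-c/\<epsilon>)) - smooth_step ((1/\<epsilon>) * x + (-d/\<epsilon>)))"
    by (intro smooth_fun_diff smooth_fun_affine[OF smooth_fun_smooth_step])
  then show ?thesis by (simp add: smooth_indicator_def[abs_def] diff_divide_distrib)
qed

lemma smooth_step_div_eq_0: "x \<le> u \<Longrightarrow> \<epsilon> > 0 \<Longrightarrow> smooth_step ((x - u) / \<epsilon>) = 0"
  by (intro smooth_step_eq_0) (simp add: divide_nonpos_pos)

lemma smooth_step_div_eq_1: "x - u \<ge> \<epsilon> \<Longrightarrow> \<epsilon> > 0 \<Longrightarrow> smooth_step ((x - u) / \<epsilon>) = 1"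
  by (intro smooth_step_eq_1) (simp add: field_simps)

lemma smooth_indicator_eq_0:
  assumes "\<epsilon> > 0" "c \<le> d" "x \<notin> {c..d + \<epsilon>}"
  shows "smooth_indicator c d \<epsilon> x = 0"
proof (cases "x < c")
  case True
  then show ?thesis using assms by (simp add: smooth_indicator_def smooth_step_div_eq_0)
next
  case False
  then have "x - d \<ge> \<epsilon>" "x - c \<ge> \<epsilon>" using assms by auto
  then show ?thesis using assms by (simp add: smooth_indicator_def smooth_step_div_eq_1)
qed

lemma abs_smooth_indicator_le_1: "\<bar>smooth_indicator c d \<epsilon> x\<bar> \<le> 1"
proof -
  have "0 \<le> smooth_step ((x - c) / \<epsilon>)" "smooth_step ((x - c) / \<epsilon>) \<le> 1"
    "0 \<le> smooth_step ((x - d) / \<epsilon>)" "smooth_step ((x - d) / \<epsilon>) \<le> 1"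
    by (rule smooth_step_nonneg smooth_step_le_1)+
  then show ?thesis unfolding smooth_indicator_def by linarith
qed

lemma smooth_indicator_tendsto:
  assumes \<epsilon>: "\<epsilon> \<longlonglongrightarrow> 0" "\<And>n. \<epsilon> n > 0" and "c \<le> d"
  shows "(\<lambda>n. smooth_indicator c d (\<epsilon> n) x) \<longlonglongrightarrow> indicator {c<..d} x"
proof -
  have small: "\<forall>\<^sub>F n in sequentially. \<epsilon> n < t" if "t > 0" for t
    using order_tendstoD(2)[OF \<epsilon>(1) that] .
  consider "x \<le> c" | "c < x" "x \<le> d" | "d < x" by linarith
  then have "\<forall>\<^sub>F n in sequentially. smooth_indicator c d (\<epsilon> n) x = indicator {c<..d} x"
  proof cases
    case 1
    then show ?thesis
      using \<open>c \<le> d\<close> \<epsilon>(2) by (simp add: smooth_indicator_def smooth_step_div_eq_0)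
  next
    case 2
    then have "0 < x - c" by simp
    from small[OF this] show ?thesis
      by eventually_elim (use 2 \<epsilon>(2) in \<open>simp add: smooth_indicator_def smooth_step_div_eq_0 smooth_step_div_eq_1\<close>)
  next
    case 3
    then have "0 < x - d" by simp
    from small[OF this] show ?thesis
      by eventually_elim
        (use 3 \<epsilon>(2) \<open>c \<le> d\<close> in \<open>simp add: smooth_indicator_def smooth_step_div_eq_1\<close>)
  qed
  then show ?thesis by (rule tendsto_eventually)
qed

lemma integral_mult_smooth_indicator_tendsto:
  fixes g :: "real \<Rightarrow> real"
  assumes g: "g absolutely_integrable_on {c..e}" and \<epsilon>: "\<epsilon> \<longlonglongrightarrow> 0" "\<And>n. \<epsilon> n > 0"
    and "c \<le> d" "d \<le> e"
  shows "(\<lambda>n. integral {c..e} (\<lambda>x. g x * smooth_indicator c d (\<epsilon> n) x)) \<longlonglongrightarrow> integral {c..d} g"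
proof -
  have "(\<lambda>n. integral {c..e} (\<lambda>x. g x * smooth_indicator c d (\<epsilon> n) x))
      \<longlonglongrightarrow> integral {c..e} (\<lambda>x. g x * indicator {c<..d} x)"
  proof (rule dominated_convergence(2))
    show "(\<lambda>x. g x * smooth_indicator c d (\<epsilon> n) x) integrable_on {c..e}" for n
      by (intro set_lebesgue_integral_eq_integral(1) absolutely_integrable_mult_continuous g
          smooth_fun_continuous_on smooth_fun_smooth_indicator)
    show "(\<lambda>x. norm (g x)) integrable_on {c..e}" using g absolutely_integrable_on_def by blast
    show "norm (g x * smooth_indicator c d (\<epsilon> n) x) \<le> norm (g x)" for n x
      using abs_smooth_indicator_le_1 by (simp add: abs_mult mult_left_le)
    show "(\<lambda>n. g x * smooth_indicator c d (\<epsilon> n) x) \<longlonglongrightarrow> g x * indicator {c<..d} x" for x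
      by (intro tendsto_mult tendsto_const smooth_indicator_tendsto \<epsilon> \<open>c \<le> d\<close>)
  qed
  also have "integral {c..e} (\<lambda>x. g x * indicator {c<..d} x)
      = integral {c..e} (\<lambda>x. if x \<in> {c..d} then g x else 0)"
    by (rule integral_spike[of "{c}"]) (auto simp: indicator_def)
  also have "\<dots> = integral ({c..d} \<inter> {c..e}) g" by (rule integral_restrict_Int)
  also have "{c..d} \<inter> {c..e} = {c..d}" using \<open>d \<le> e\<close> by auto
  finally show ?thesis .
qed

lemma AE_eq_const_if_interval_integrals:
  fixes k :: "real \<Rightarrow> real"
  assumes k: "k absolutely_integrable_on {a..b}"
    and interval: "\<And>x y. a < x \<Longrightarrow> x < y \<Longrightarrow> y < b \<Longrightarrow> integral {x..y} k = C * (y - x)"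
  shows "\<exists>N. negligible N \<and> (\<forall>x \<in> {a<..<b} - N. k x = C)"
proof -
  define k0 where "k0 x = (if x \<in> {a..b} then k x - C else 0)" for x
  have "(\<lambda>x. k x - C) absolutely_integrable_on {a..b}"
    by (intro set_integral_diff(1) k absolutely_integrable_continuous_real continuous_on_const)
  then have "k0 absolutely_integrable_on UNIV"
    unfolding k0_def[abs_def] by (subst absolutely_integrable_restrict_UNIV)
  then have "k0 integrable_on cbox u v" for u v
    by (meson set_lebesgue_integral_eq_integral(1) integrable_on_subcbox subset_UNIV)
  then obtain N where N: "negligible N"
    and lebesgue_point: "\<And>x e. \<lbrakk>x \<notin> N; 0 < e\<rbrakk> \<Longrightarrow> \<exists>d>0. \<forall>h. 0 < h \<and> h < d \<longrightarrow>
               norm (integral (cbox x (x + h *\<^sub>R One)) k0 /\<^sub>R h ^ DIM(real) - k0 x) < e"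
    using integrable_ccontinuous_explicit[of k0] by blast
  have "k x = C" if x: "x \<in> {a<..<b}" "x \<notin> N" for x
  proof (rule ccontr)
    assume "k x \<noteq> C"
    then obtain d where d: "d > 0" and dh: "\<And>h. 0 < h \<and> h < d \<Longrightarrow>
        norm (integral (cbox x (x + h *\<^sub>R One)) k0 /\<^sub>R h ^ DIM(real) - k0 x) < \<bar>k x - C\<bar>"
      using lebesgue_point[OF x(2), of "\<bar>k x - C\<bar>"] by auto
    define h where "h = min (d/2) ((b - x)/2)"
    have "h \<le> (b - x)/2" unfolding h_def by (rule min.cobounded2)
    then have h: "0 < h" "h < d" "x + h < b" using d x by (auto simp: h_def)
    have "integral (cbox x (x + h *\<^sub>R One)) k0 = integral {x..x+h} (\<lambda>t. k t - C)"
      by (simp add: cbox_interval)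
        (rule Henstock_Kurzweil_Integration.integral_cong, use x h in \<open>auto simp: k0_def\<close>)
    also have "\<dots> = integral {x..x+h} k - integral {x..x+h} (\<lambda>t. C)"
    proof (rule Henstock_Kurzweil_Integration.integral_diff)
      show "k integrable_on {x..x+h}"
        using x h by (intro set_lebesgue_integral_eq_integral(1) absolutely_integrable_on_subinterval[OF k]) auto
    qed (rule integrable_continuous_interval, rule continuous_on_const)
    also have "\<dots> = 0" using interval[of x "x+h"] x h by simp
    finally have "norm (k0 x) < \<bar>k x - C\<bar>" using dh[of h] h by simp
    then show False using x by (simp add: k0_def)
  qed
  then show ?thesis using N by blast
qed

context vanishing_weak_deriv
begin

lemma integral_interval:
  assumes cd: "0 < c" "c < d" "d < L"
  shows "integral {c..d} k = k_avg * (d - c)"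
proof -
  define e where "e = (d + L) / 2"
  have e: "d < e" "e < L" using cd by (auto simp: e_def)
  define \<epsilon> where "\<epsilon> n = (e - d) * inverse (real (Suc n))" for n
  have \<epsilon>_pos: "\<epsilon> n > 0" for n using e by (simp add: \<epsilon>_def)
  have \<epsilon>_le: "\<epsilon> n \<le> e - d" for n using e by (simp add: \<epsilon>_def mult_left_le inverse_le_1_iff)
  have \<epsilon>_lim: "\<epsilon> \<longlonglongrightarrow> 0"
    unfolding \<epsilon>_def[abs_def] using tendsto_mult_right_zero[OF LIMSEQ_inverse_real_of_nat] by simp
  define \<rho> where "\<rho> n = smooth_indicator c d (\<epsilon> n)" for n
  have \<rho>_vanish: "\<rho> n x = 0" if "x \<notin> {c..e}" for n x
    using that smooth_indicator_eq_0[OF \<epsilon>_pos, of c d x] \<epsilon>_le[of n] cd by (auto simp: \<rho>_def)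
  have \<rho>_cont: "continuous_on S (\<rho> n)" for S n
    unfolding \<rho>_def by (intro smooth_fun_continuous_on smooth_fun_smooth_indicator)
  have "integral {c..e} (\<lambda>x. k x * \<rho> n x) = integral {c..e} (\<lambda>x. 1 * \<rho> n x) * k_avg" for n
  proof -
    have "test_fun L (\<rho> n)"
      by (rule test_funI[OF _ _ _ _ \<rho>_vanish]) (use cd e in \<open>auto simp: \<rho>_def smooth_fun_smooth_indicator\<close>)
    then have "integral {0..L} (\<lambda>x. k x * \<rho> n x) = integral {0..L} (\<rho> n) * k_avg"
      by (rule integral_mult_test_fun)
    moreover have "integral {0..L} (\<lambda>x. k x * \<rho> n x) = integral {c..e} (\<lambda>x. k x * \<rho> n x)"
      using cd by (intro loc_int_mult_compact_support(4)[OF k_loc_int _ e(2) \<rho>_cont \<rho>_vanish]) simp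
    moreover have "integral {0..L} (\<rho> n) = integral {c..e} (\<rho> n)"
      using cd e
      by (intro absolutely_integrable_zero_outside(4) absolutely_integrable_continuous_real \<rho>_cont \<rho>_vanish) auto
    ultimately show ?thesis by simp
  qed
  moreover have "(\<lambda>n. integral {c..e} (\<lambda>x. 1 * \<rho> n x)) \<longlonglongrightarrow> integral {c..d} (\<lambda>x. 1)"
    unfolding \<rho>_def using cd e
    by (intro integral_mult_smooth_indicator_tendsto \<epsilon>_lim \<epsilon>_pos
        absolutely_integrable_continuous_real continuous_on_const) auto
  ultimately have "(\<lambda>n. integral {c..e} (\<lambda>x. k x * \<rho> n x)) \<longlonglongrightarrow> integral {c..d} (\<lambda>x. 1) * k_avg"
    by (simp add: tendsto_mult_right)
  moreover have "(\<lambda>n. integral {c..e} (\<lambda>x. k x * \<rho> n x)) \<longlonglongrightarrow> integral {c..d} k"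
    using k_loc_int cd e unfolding \<rho>_def loc_int_def integrable_lebesgue_on_iff
    by (intro integral_mult_smooth_indicator_tendsto \<epsilon>_lim \<epsilon>_pos) auto
  ultimately have "integral {c..d} k = integral {c..d} (\<lambda>x. 1) * k_avg"
    using LIMSEQ_unique by blast
  then show ?thesis using cd by simp
qed

lemma AE_eq_k_avg: "AE x in lebesgue_on {0..L}. k x = k_avg"
proof -
  have "\<exists>N. negligible N \<and> (\<forall>x \<in> {L/(real m+3)<..<L - L/(real m+3)} - N. k x = k_avg)" for m
  proof (rule AE_eq_const_if_interval_integrals)
    have "L/(real m+3) > 0" using L_pos by simp
    then show "k absolutely_integrable_on {L/(real m+3)..L - L/(real m+3)}"
      using k_loc_int L_pos unfolding loc_int_def integrable_lebesgue_on_iff by simp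
    show "integral {x..y} k = k_avg * (y - x)"
      if "L/(real m+3) < x" "x < y" "y < L - L/(real m+3)" for x y
    proof (rule integral_interval)
      have "L/(real m+3) > 0" using L_pos by simp
      then show "0 < x" "y < L" using that by linarith+
    qed (use that in simp)
  qed
  then obtain N :: "nat \<Rightarrow> real set"
    where "\<forall>m. negligible (N m) \<and> (\<forall>x \<in> {L/(real m+3)<..<L - L/(real m+3)} - N m. k x = k_avg)"
    using choice[of "\<lambda>m N. negligible N \<and> (\<forall>x \<in> {L/(real m+3)<..<L - L/(real m+3)} - N. k x = k_avg)"]
    by blast
  then have N: "\<And>m. negligible (N m)"
    and N_good: "\<And>m x. x \<in> {L/(real m+3)<..<L - L/(real m+3)} - N m \<Longrightarrow> k x = k_avg"
    by blast+
  define N' where "N' = insert 0 (insert L (\<Union>m. N m))"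
  have "negligible N'" unfolding N'_def using N by (auto intro!: negligible_Union_nat)
  have good: "k x = k_avg" if "x \<in> {0..L}" "x \<notin> N'" for x
  proof -
    have x: "0 < x" "x < L" using that by (auto simp: N'_def)
    define t where "t = min x (L - x)"
    have t: "t > 0" using x by (simp add: t_def)
    obtain m :: nat where m: "L / t < real m" using reals_Archimedean2 by blast
    have "L < t * real m" using m t by (simp add: field_simps)
    also have "\<dots> \<le> t * (real m + 3)" using t by simp
    finally have "L / (real m + 3) < t" using t by (simp add: field_simps)
    then have "x \<in> {L/(real m+3)<..<L - L/(real m+3)}" by (auto simp: t_def)
    then show ?thesis using N_good[of x m] that by (auto simp: N'_def)
  qed
  have "negligible (N' \<inter> {0..L})" using \<open>negligible N'\<close> by (rule negligible_subset) auto
  then have "N' \<inter> {0..L} \<in> null_sets (lebesgue_on {0..L})"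
    by (simp add: null_sets_restrict_space negligible_iff_null_sets)
  then show ?thesis by (rule AE_I') (use good in auto)
qed

end

lemma du_bois_reymond:
  assumes "L > 0" "loc_int L k"
    "\<And>\<phi>. test_fun L \<phi> \<Longrightarrow> (\<integral>x. k x * deriv \<phi> x \<partial>lebesgue_on {0..L}) = 0"
  shows "\<exists>C. AE x in lebesgue_on {0..L}. k x = C"
proof -
  interpret vanishing_weak_deriv L k using assms by unfold_locales
  show ?thesis using AE_eq_k_avg by blast
qed

section \<open>Integration by parts and weak derivatives\<close>

lemma integral_combine_diff:
  fixes f :: "real \<Rightarrow> real"
  assumes "f integrable_on {a..b}" "a \<le> x" "x \<le> y" "y \<le> b"
  shows "integral {a..y} f - integral {a..x} f = integral {x..y} f"
proof -
  have "f integrable_on {a..y}" by (rule integrable_subinterval_real[OF assms(1)]) (use assms in auto)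
  from Henstock_Kurzweil_Integration.integral_combine[OF assms(2,3) this] show ?thesis by simp
qed

locale by_parts_primitive =
  fixes a b :: real and g \<phi> \<phi>' :: "real \<Rightarrow> real"
  assumes ab: "a \<le> b" and g_abs_int: "g absolutely_integrable_on {a..b}"
    and \<phi>_deriv: "\<And>x. x \<in> {a..b} \<Longrightarrow> (\<phi> has_real_derivative \<phi>' x) (at x within {a..b})"
    and \<phi>'_cont: "continuous_on {a..b} \<phi>'"
begin

definition G where "G x = integral {a..x} g" for x
definition A where "A x = integral {a..x} (\<lambda>t. \<bar>g t\<bar>)" for x

lemma g_int: "g integrable_on {a..b}" using g_abs_int set_lebesgue_integral_eq_integral(1) by blast
lemma abs_g_int: "(\<lambda>t. \<bar>g t\<bar>) integrable_on {a..b}"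
proof -
  have "(\<lambda>x. norm (g x)) integrable_on {a..b}" using g_abs_int absolutely_integrable_on_def by blast
  then show ?thesis by simp
qed

lemma subinterval_integrable: "f integrable_on {a..b} \<Longrightarrow> a \<le> x \<Longrightarrow> y \<le> b \<Longrightarrow> f integrable_on {x..y}" for f :: "real \<Rightarrow> real"
  by (rule integrable_subinterval_real) auto

lemma G_cont: "continuous_on {a..b} G" unfolding G_def[abs_def] by (rule indefinite_integral_continuous_1[OF g_int])
lemma A_cont: "continuous_on {a..b} A" unfolding A_def[abs_def] by (rule indefinite_integral_continuous_1[OF abs_g_int])

lemma \<phi>_cont: "continuous_on {a..b} \<phi>"
  using \<phi>_deriv DERIV_continuous continuous_on_eq_continuous_within by blast

lemma g\<phi>_int: "(\<lambda>t. g t * \<phi> t) integrable_on {a..b}"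
  using absolutely_integrable_mult_continuous[OF g_abs_int \<phi>_cont] set_lebesgue_integral_eq_integral(1) by blast

lemma G\<phi>'_int: "(\<lambda>t. G t * \<phi>' t) integrable_on {a..b}"
  by (intro integrable_continuous_interval continuous_on_mult G_cont \<phi>'_cont)

lemma \<phi>'_int: "\<phi>' integrable_on {a..b}"
  by (intro integrable_continuous_interval \<phi>'_cont)

lemma deriv_bounded: "\<exists>M\<ge>0. \<forall>x\<in>{a..b}. \<bar>\<phi>' x\<bar> \<le> M"
proof -
  have "bounded (\<phi>' ` {a..b})" by (intro compact_imp_bounded compact_continuous_image \<phi>'_cont) auto
  then obtain M where "\<forall>x\<in>{a..b}. norm (\<phi>' x) \<le> M" by (auto simp: bounded_iff)
  then show ?thesis by (intro exI[of _ "max M 0"]) auto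
qed

definition M where "M = (SOME M. M \<ge> 0 \<and> (\<forall>x\<in>{a..b}. \<bar>\<phi>' x\<bar> \<le> M))"

lemma M_bound: "M \<ge> 0" "x \<in> {a..b} \<Longrightarrow> \<bar>\<phi>' x\<bar> \<le> M"
  using someI_ex[OF deriv_bounded] unfolding M_def by auto

lemma \<phi>'_integral: "a \<le> x \<Longrightarrow> x \<le> y \<Longrightarrow> y \<le> b \<Longrightarrow> integral {x..y} \<phi>' = \<phi> y - \<phi> x"
proof -
  assume xy: "a \<le> x" "x \<le> y" "y \<le> b"
  have "(\<phi>' has_integral (\<phi> y - \<phi> x)) {x..y}"
  proof (rule fundamental_theorem_of_calculus[OF xy(2)])
    fix t assume t: "t \<in> {x..y}"
    then have "(\<phi> has_real_derivative \<phi>' t) (at t within {a..b})" using xy by (intro \<phi>_deriv) auto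
    then have "(\<phi> has_real_derivative \<phi>' t) (at t within {x..y})" by (rule DERIV_subset) (use xy in auto)
    then show "(\<phi> has_vector_derivative \<phi>' t) (at t within {x..y})"
      by (simp add: has_real_derivative_iff_has_vector_derivative)
  qed
  then show ?thesis by (rule integral_unique)
qed

lemma \<phi>_lipschitz: "t \<in> {a..b} \<Longrightarrow> y \<in> {a..b} \<Longrightarrow> t \<le> y \<Longrightarrow> \<bar>\<phi> y - \<phi> t\<bar> \<le> M * (y - t)"
proof -
  assume ty: "t \<in> {a..b}" "y \<in> {a..b}" "t \<le> y"
  have "\<bar>\<phi> y - \<phi> t\<bar> = norm (integral {t..y} \<phi>')" using \<phi>'_integral[of t y] ty by simp
  also have "\<dots> \<le> integral {t..y} (\<lambda>_. M)"
    by (rule integral_norm_bound_integral) (use ty M_bound in \<open>auto intro!: subinterval_integrable[OF \<phi>'_int]\<close>)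
  also have "\<dots> = M * (y - t)" using ty by simp
  finally show ?thesis .
qed

lemma G_increment: "a \<le> x \<Longrightarrow> x \<le> t \<Longrightarrow> t \<le> y \<Longrightarrow> y \<le> b \<Longrightarrow> \<bar>G t - G x\<bar> \<le> A y - A x"
proof -
  assume xy: "a \<le> x" "x \<le> t" "t \<le> y" "y \<le> b"
  have "\<bar>G t - G x\<bar> = norm (integral {x..t} g)"
    using integral_combine_diff[OF g_int, of x t] xy by (simp add: G_def)
  also have "\<dots> \<le> integral {x..t} (\<lambda>s. \<bar>g s\<bar>)"
    by (rule integral_norm_bound_integral) (use xy in \<open>auto intro!: subinterval_integrable[OF g_int] subinterval_integrable[OF abs_g_int]\<close>)
  also have "\<dots> \<le> integral {x..t} (\<lambda>s. \<bar>g s\<bar>) + integral {t..y} (\<lambda>s. \<bar>g s\<bar>)"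
    using xy by (simp add: Henstock_Kurzweil_Integration.integral_nonneg subinterval_integrable[OF abs_g_int])
  also have "\<dots> = integral {x..y} (\<lambda>s. \<bar>g s\<bar>)"
    by (rule Henstock_Kurzweil_Integration.integral_combine) (use xy in \<open>auto intro!: subinterval_integrable[OF abs_g_int]\<close>)
  also have "\<dots> = A y - A x" using integral_combine_diff[OF abs_g_int, of x y] xy by (simp add: A_def)
  finally show ?thesis .
qed

text \<open>The difference \<open>D\<close> of the two sides of the formula on \<open>[a, u]\<close> vanishes at \<open>a\<close>;
  the bound \<open>|D y - D x| \<le> 2 M (y - x) (A y - A x)\<close> with \<open>A\<close> continuous gives it zero derivative.\<close>

definition D where "D u = G u * \<phi> u - integral {a..u} (\<lambda>t. G t * \<phi>' t) - integral {a..u} (\<lambda>t. g t * \<phi> t)" for u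

lemma D_diff:
  assumes xy: "a \<le> x" "x \<le> y" "y \<le> b"
  shows "D y - D x = integral {x..y} (\<lambda>t. (G x - G t) * \<phi>' t) + integral {x..y} (\<lambda>t. g t * (\<phi> y - \<phi> t))"
proof -
  have int: "\<phi>' integrable_on {x..y}" "(\<lambda>t. G t * \<phi>' t) integrable_on {x..y}"
    "g integrable_on {x..y}" "(\<lambda>t. g t * \<phi> t) integrable_on {x..y}"
    using xy by (auto intro!: subinterval_integrable[OF \<phi>'_int] subinterval_integrable[OF G\<phi>'_int]
        subinterval_integrable[OF g_int] subinterval_integrable[OF g\<phi>_int])
  have "integral {x..y} (\<lambda>t. (G x - G t) * \<phi>' t) = integral {x..y} (\<lambda>t. G x * \<phi>' t - G t * \<phi>' t)"
    by (simp add: algebra_simps)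
  also have "\<dots> = G x * (\<phi> y - \<phi> x) - integral {x..y} (\<lambda>t. G t * \<phi>' t)"
    using int \<phi>'_integral[OF xy]
    by (subst Henstock_Kurzweil_Integration.integral_diff) (auto intro: integrable_on_mult_right)
  finally have T1: "integral {x..y} (\<lambda>t. (G x - G t) * \<phi>' t)
      = G x * (\<phi> y - \<phi> x) - integral {x..y} (\<lambda>t. G t * \<phi>' t)" .
  have "integral {x..y} (\<lambda>t. g t * (\<phi> y - \<phi> t)) = integral {x..y} (\<lambda>t. \<phi> y * g t - g t * \<phi> t)"
    by (simp add: algebra_simps)
  also have "\<dots> = \<phi> y * (G y - G x) - integral {x..y} (\<lambda>t. g t * \<phi> t)"
    using int integral_combine_diff[OF g_int xy]
    by (subst Henstock_Kurzweil_Integration.integral_diff) (auto intro: integrable_on_mult_right simp: G_def)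
  finally show ?thesis
    using T1 integral_combine_diff[OF G\<phi>'_int xy] integral_combine_diff[OF g\<phi>_int xy]
    by (simp add: D_def algebra_simps)
qed

lemma G_term_bound:
  assumes xy: "a \<le> x" "x \<le> y" "y \<le> b"
  shows "\<bar>integral {x..y} (\<lambda>t. (G x - G t) * \<phi>' t)\<bar> \<le> M * (y - x) * (A y - A x)"
proof -
  have "norm (integral {x..y} (\<lambda>t. (G x - G t) * \<phi>' t)) \<le> integral {x..y} (\<lambda>t. (A y - A x) * M)"
  proof (rule integral_norm_bound_integral)
    show "(\<lambda>t. (G x - G t) * \<phi>' t) integrable_on {x..y}"
      by (intro integrable_continuous_interval continuous_on_mult continuous_on_diff continuous_on_const
          continuous_on_subset[OF G_cont] continuous_on_subset[OF \<phi>'_cont]) (use xy in auto)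
    fix t assume t: "t \<in> {x..y}"
    have "\<bar>G x - G t\<bar> \<le> A y - A x" using G_increment[of x t y] xy t by (simp add: abs_minus_commute)
    moreover have "\<bar>\<phi>' t\<bar> \<le> M" using M_bound(2)[of t] xy t by simp
    ultimately show "norm ((G x - G t) * \<phi>' t) \<le> (A y - A x) * M"
      by (simp add: abs_mult mult_mono')
  qed (rule integrable_continuous_interval, rule continuous_on_const)
  then show ?thesis using xy by (simp add: algebra_simps)
qed

lemma g_term_bound:
  assumes xy: "a \<le> x" "x \<le> y" "y \<le> b"
  shows "\<bar>integral {x..y} (\<lambda>t. g t * (\<phi> y - \<phi> t))\<bar> \<le> M * (y - x) * (A y - A x)"
proof -
  have "norm (integral {x..y} (\<lambda>t. g t * (\<phi> y - \<phi> t))) \<le> integral {x..y} (\<lambda>t. (M * (y - x)) * \<bar>g t\<bar>)"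
  proof (rule integral_norm_bound_integral)
    have "(\<lambda>t. \<phi> y * g t - g t * \<phi> t) integrable_on {x..y}"
      using xy by (intro Henstock_Kurzweil_Integration.integrable_diff integrable_on_mult_right
          subinterval_integrable[OF g_int] subinterval_integrable[OF g\<phi>_int]) auto
    then show "(\<lambda>t. g t * (\<phi> y - \<phi> t)) integrable_on {x..y}" by (simp add: algebra_simps)
    show "(\<lambda>t. (M * (y - x)) * \<bar>g t\<bar>) integrable_on {x..y}"
      using xy by (intro integrable_on_mult_right subinterval_integrable[OF abs_g_int]) auto
    fix t assume t: "t \<in> {x..y}"
    have "\<bar>\<phi> y - \<phi> t\<bar> \<le> M * (y - t)" using \<phi>_lipschitz[of t y] xy t by auto
    also have "\<dots> \<le> M * (y - x)" using t M_bound(1) by (simp add: mult_left_mono)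
    finally show "norm (g t * (\<phi> y - \<phi> t)) \<le> (M * (y - x)) * \<bar>g t\<bar>"
      by (simp add: abs_mult mult_left_mono mult.commute)
  qed
  also have "\<dots> = (M * (y - x)) * (A y - A x)"
    using integral_combine_diff[OF abs_g_int xy] by (simp add: A_def)
  finally show ?thesis by simp
qed

lemma D_increment:
  assumes "a \<le> x" "x \<le> y" "y \<le> b"
  shows "\<bar>D y - D x\<bar> \<le> 2 * M * (y - x) * (A y - A x)"
  using D_diff[OF assms] G_term_bound[OF assms] g_term_bound[OF assms] by linarith

lemma D_has_derivative_0: "x \<in> {a..b} \<Longrightarrow> (D has_real_derivative 0) (at x within {a..b})"
proof -
  assume x: "x \<in> {a..b}"
  have "((\<lambda>y. (D y - D x) / (y - x)) \<longlongrightarrow> 0) (at x within {a..b})"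
  proof (rule Lim_null_comparison)
    show "\<forall>\<^sub>F y in at x within {a..b}. norm ((D y - D x) / (y - x)) \<le> 2 * M * \<bar>A y - A x\<bar>"
      unfolding eventually_at_filter
    proof (rule always_eventually, intro allI impI)
      fix y assume y: "y \<noteq> x" "y \<in> {a..b}"
      have "\<bar>D y - D x\<bar> \<le> 2 * M * \<bar>y - x\<bar> * \<bar>A y - A x\<bar>"
      proof (cases "x \<le> y")
        case True then show ?thesis using D_increment[of x y] G_increment[of x y y] x y by simp
      next
        case False then show ?thesis using D_increment[of y x] G_increment[of y x x] x y by (simp add: abs_minus_commute)
      qed
      then show "norm ((D y - D x) / (y - x)) \<le> 2 * M * \<bar>A y - A x\<bar>"
        using y by (simp add: abs_divide divide_le_eq mult_ac)
    qed
    have "(A \<longlongrightarrow> A x) (at x within {a..b})" using A_cont x continuous_on_def by blast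
    then have "((\<lambda>y. 2 * M * \<bar>A y - A x\<bar>) \<longlongrightarrow> 2 * M * \<bar>A x - A x\<bar>) (at x within {a..b})"
      by (intro tendsto_intros)
    then show "((\<lambda>y. 2 * M * \<bar>A y - A x\<bar>) \<longlongrightarrow> 0) (at x within {a..b})" by simp
  qed
  then show ?thesis by (simp add: has_field_derivative_iff)
qed

lemma by_parts: "integral {a..b} (\<lambda>t. g t * \<phi> t) = G b * \<phi> b - integral {a..b} (\<lambda>t. G t * \<phi>' t)"
proof -
  obtain c where c: "\<forall>x\<in>{a..b}. D x = c"
    using has_field_derivative_zero_constant[of "{a..b}" D] D_has_derivative_0 by auto
  have "D a = 0" by (simp add: D_def G_def)
  then have "D b = 0" using c ab by auto
  then show ?thesis by (simp add: D_def)
qed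

end

lemma integration_by_parts_primitive:
  fixes g \<phi> \<phi>' :: "real \<Rightarrow> real"
  assumes "a \<le> b" "g absolutely_integrable_on {a..b}"
    "\<And>x. x \<in> {a..b} \<Longrightarrow> (\<phi> has_real_derivative \<phi>' x) (at x within {a..b})"
    "continuous_on {a..b} \<phi>'"
  shows "integral {a..b} (\<lambda>t. g t * \<phi> t) = integral {a..b} g * \<phi> b - integral {a..b} (\<lambda>t. integral {a..t} g * \<phi>' t)"
proof -
  interpret by_parts_primitive a b g \<phi> \<phi>' using assms by unfold_locales
  show ?thesis using by_parts by (simp add: G_def)
qed

definition primitive :: "real \<Rightarrow> (real \<Rightarrow> real) \<Rightarrow> real \<Rightarrow> real" where
  "primitive c g x = c + integral {0..x} g"

lemma continuous_on_primitive:
  "g integrable_on {0..L} \<Longrightarrow> continuous_on {0..L} (primitive c g)"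
  unfolding primitive_def[abs_def]
  by (intro continuous_on_add continuous_on_const indefinite_integral_continuous_1)

lemma has_real_derivative_primitive:
  assumes "continuous_on {0..L} g" "x \<in> {0..L}"
  shows "(primitive c g has_real_derivative g x) (at x within {0..L})"
proof -
  have "((\<lambda>u. integral {0..u} g) has_vector_derivative g x) (at x within {0..L})"
    by (rule integral_has_vector_derivative[OF assms])
  then show ?thesis
    unfolding primitive_def[abs_def]
    by (auto intro!: derivative_eq_intros simp: has_real_derivative_iff_has_vector_derivative)
qed

lemma integral_eq_diff_if_has_real_derivative:
  fixes F F' :: "real \<Rightarrow> real"
  assumes "0 \<le> L" "\<And>x. x \<in> {0..L} \<Longrightarrow> (F has_real_derivative F' x) (at x within {0..L})"
  shows "integral {0..L} F' = F L - F 0"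
proof -
  have "(F' has_integral (F L - F 0)) {0..L}"
    by (rule fundamental_theorem_of_calculus[OF assms(1)])
      (use assms(2) in \<open>simp add: has_real_derivative_iff_has_vector_derivative\<close>)
  then show ?thesis by (rule integral_unique)
qed

lemma integral_primitive_mult:
  fixes g \<phi> :: "real \<Rightarrow> real"
  assumes "0 \<le> L" "g absolutely_integrable_on {0..L}" "continuous_on {0..L} \<phi>'"
    "\<And>x. x \<in> {0..L} \<Longrightarrow> (\<phi> has_real_derivative \<phi>' x) (at x within {0..L})"
    "\<phi> 0 = 0" "\<phi> L = 0" "integral {0..L} \<phi>' = 0"
  shows "integral {0..L} (\<lambda>t. g t * \<phi> t) = - integral {0..L} (\<lambda>t. primitive c g t * \<phi>' t)"
proof -
  have "integral {0..L} (\<lambda>t. primitive c g t * \<phi>' t)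
      = integral {0..L} (\<lambda>t. c * \<phi>' t + integral {0..t} g * \<phi>' t)"
    by (simp add: primitive_def algebra_simps)
  also have "\<dots> = integral {0..L} (\<lambda>t. integral {0..t} g * \<phi>' t)"
  proof -
    have "(\<lambda>t. integral {0..t} g * \<phi>' t) integrable_on {0..L}"
      using assms(2,3) by (intro integrable_continuous_interval continuous_on_mult
          indefinite_integral_continuous_1 set_lebesgue_integral_eq_integral(1))
    moreover have "(\<lambda>t. c * \<phi>' t) integrable_on {0..L}"
      using assms(3) by (intro integrable_on_mult_right integrable_continuous_interval)
    ultimately show ?thesis
      using assms(7) by (simp add: Henstock_Kurzweil_Integration.integral_add)
  qed
  also have "\<dots> = - integral {0..L} (\<lambda>t. g t * \<phi> t)"
    using integration_by_parts_primitive[OF assms(1,2,4,3)] assms(6) by simp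
  finally show ?thesis by simp
qed

text \<open>Two integrations by parts; the constants of integration drop out since
  \<open>\<integral> Y\<^sub>1 = \<integral> Y\<^sub>2 = 0\<close> by the boundary conditions.\<close>

lemma integral_fourth_primitive_mult:
  fixes f4 :: "real \<Rightarrow> real"
  assumes L: "0 \<le> L" and f4: "f4 absolutely_integrable_on {0..L}"
    and Y: "Y3 = primitive c3 f4" "Y2 = primitive c2 Y3" "Y1 = primitive c1 Y2" "Y0 = primitive c0 Y1"
    and boundary: "Y0 0 = 0" "Y0 L = 0" "Y1 0 = 0" "Y1 L = 0"
  shows "integral {0..L} (\<lambda>x. f4 x * Y0 x) = integral {0..L} (\<lambda>x. Y2 x * Y2 x)"
proof -
  have Y3_cont: "continuous_on {0..L} Y3"
    unfolding Y by (intro continuous_on_primitive set_lebesgue_integral_eq_integral(1) f4)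
  have Y2_cont: "continuous_on {0..L} Y2"
    unfolding Y(2) by (intro continuous_on_primitive integrable_continuous_interval Y3_cont)
  have Y1_cont: "continuous_on {0..L} Y1"
    unfolding Y(3) by (intro continuous_on_primitive integrable_continuous_interval Y2_cont)
  have Y0_deriv: "\<And>x. x \<in> {0..L} \<Longrightarrow> (Y0 has_real_derivative Y1 x) (at x within {0..L})"
    unfolding Y(4) by (rule has_real_derivative_primitive[OF Y1_cont])
  have Y1_deriv: "\<And>x. x \<in> {0..L} \<Longrightarrow> (Y1 has_real_derivative Y2 x) (at x within {0..L})"
    unfolding Y(3) by (rule has_real_derivative_primitive[OF Y2_cont])
  have int_Y1: "integral {0..L} Y1 = 0"
    using integral_eq_diff_if_has_real_derivative[OF L Y0_deriv] boundary by simp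
  have int_Y2: "integral {0..L} Y2 = 0"
    using integral_eq_diff_if_has_real_derivative[OF L Y1_deriv] boundary by simp
  have "integral {0..L} (\<lambda>x. f4 x * Y0 x) = - integral {0..L} (\<lambda>t. primitive c3 f4 t * Y1 t)"
    by (rule integral_primitive_mult[OF L f4 Y1_cont Y0_deriv boundary(1,2) int_Y1])
  also have "integral {0..L} (\<lambda>t. primitive c3 f4 t * Y1 t) = - integral {0..L} (\<lambda>t. primitive c2 Y3 t * Y2 t)"
    unfolding Y(1)[symmetric]
    by (rule integral_primitive_mult[OF L absolutely_integrable_continuous_real[OF Y3_cont]
          Y2_cont Y1_deriv boundary(3,4) int_Y2])
  finally show ?thesis using Y(2) by simp
qed

lemma AE_lebesgue_on_negligible:
  assumes "AE x in lebesgue_on {a..b::real}. P x"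
  obtains N where "negligible N" "\<And>x. x \<in> {a..b} \<Longrightarrow> x \<notin> N \<Longrightarrow> P x"
proof -
  obtain N where N: "N \<in> null_sets (lebesgue_on {a..b})" "{x \<in> space (lebesgue_on {a..b}). \<not> P x} \<subseteq> N"
    using assms unfolding eventually_ae_filter by blast
  have "{a..b} \<in> sets lebesgue" by simp
  with N(1) have "N \<in> null_sets lebesgue" by (subst (asm) null_sets_restrict_space) auto
  then show ?thesis using N(2) that by (auto simp: negligible_iff_null_sets)
qed

lemma continuous_on_AE_eq:
  fixes F1 F2 :: "real \<Rightarrow> real"
  assumes L: "L > 0" and cont: "continuous_on {0..L} F1" "continuous_on {0..L} F2"
    and ae: "AE x in lebesgue_on {0..L}. F1 x = F2 x" and x: "x \<in> {0..L}"
  shows "F1 x = F2 x"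
proof -
  define H where "H t = F1 t - F2 t" for t
  have H_cont: "continuous_on {0..L} H" unfolding H_def[abs_def] by (intro continuous_on_diff cont)
  obtain N where N: "negligible N" "\<And>t. t \<in> {0..L} \<Longrightarrow> t \<notin> N \<Longrightarrow> F1 t = F2 t"
    using AE_lebesgue_on_negligible[OF ae] by blast
  have "integral {0..u} H = 0" if "u \<in> {0..L}" for u
  proof -
    have "integral {0..u} H = integral {0..u} (\<lambda>_. 0::real)"
      by (rule integral_spike[OF N(1)]) (use N(2) that in \<open>auto simp: H_def\<close>)
    then show ?thesis by simp
  qed
  then have "((\<lambda>u. integral {0..u} H) has_vector_derivative 0) (at x within cbox 0 L)"
    by (intro has_vector_derivative_transform_within[where d=1, OF has_vector_derivative_const])
      (use x in auto)
  moreover have "((\<lambda>u. integral {0..u} H) has_vector_derivative H x) (at x within cbox 0 L)"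
    using integral_has_vector_derivative[OF H_cont x] by simp
  ultimately have "H x = 0"
    using vector_derivative_unique_within_closed_interval[OF L] x by fastforce
  then show ?thesis by (simp add: H_def)
qed

lemma weak_deriv_AE_cong:
  assumes wd: "weak_deriv L f f'" and ae: "AE x in lebesgue_on {0..L}. f' x = g x"
    and g: "loc_int L g"
  shows "weak_deriv L f g"
  unfolding weak_deriv_def
proof (intro conjI allI impI)
  show "loc_int L f" "loc_int L g" using wd g by (auto simp: weak_deriv_def)
  fix \<phi> assume \<phi>: "test_fun L \<phi>"
  then obtain a b where "smooth_fun \<phi>" "0 < a" "b < L" and vanish: "\<And>x. x \<notin> {a..b} \<Longrightarrow> \<phi> x = 0"
    by (rule test_funE) blast
  then have \<phi>_cont: "continuous_on UNIV \<phi>" by (simp add: smooth_fun_continuous_on)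
  have f': "loc_int L f'" using wd by (simp add: weak_deriv_def)
  have "(\<integral>x. f' x * \<phi> x \<partial>lebesgue_on {0..L}) = (\<integral>x. g x * \<phi> x \<partial>lebesgue_on {0..L})"
  proof (rule integral_cong_AE)
    show "(\<lambda>x. f' x * \<phi> x) \<in> borel_measurable (lebesgue_on {0..L})"
      "(\<lambda>x. g x * \<phi> x) \<in> borel_measurable (lebesgue_on {0..L})"
      using loc_int_mult_compact_support(2)[OF f' \<open>0 < a\<close> \<open>b < L\<close> \<phi>_cont vanish]
        loc_int_mult_compact_support(2)[OF g \<open>0 < a\<close> \<open>b < L\<close> \<phi>_cont vanish]
      by (simp_all add: borel_measurable_integrable)
    show "AE x in lebesgue_on {0..L}. f' x * \<phi> x = g x * \<phi> x"
      using ae by eventually_elim simp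
  qed
  then show "(\<integral>x. f x * deriv \<phi> x \<partial>lebesgue_on {0..L}) = - (\<integral>x. g x * \<phi> x \<partial>lebesgue_on {0..L})"
    using wd \<phi> unfolding weak_deriv_def by simp
qed

lemma loc_int_if_absolutely_integrable:
  assumes "g absolutely_integrable_on {0..L}"
  shows "loc_int L g"
  unfolding loc_int_def integrable_lebesgue_on_iff
proof (intro allI impI)
  fix a b :: real assume ab: "0 < a" "b < L"
  show "g absolutely_integrable_on {a..b}"
  proof (cases "a \<le> b")
    case True
    then show ?thesis using ab by (intro absolutely_integrable_on_subinterval[OF assms]) auto
  qed (simp add: set_integrable_def)
qed

text \<open>The difference of \<open>f\<close> and the primitive of its weak derivative has vanishing weak derivative
  (integration by parts against test functions), so it is constant by du Bois-Reymond.\<close>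

lemma weak_deriv_AE_eq_primitive:
  assumes L: "L > 0" and wd: "weak_deriv L f g" and g: "g absolutely_integrable_on {0..L}"
  shows "\<exists>c. AE x in lebesgue_on {0..L}. f x = primitive c g x"
proof -
  define G where "G = primitive 0 g"
  have G_cont: "continuous_on {0..L} G"
    unfolding G_def by (intro continuous_on_primitive set_lebesgue_integral_eq_integral(1) g)
  have f: "loc_int L f" using wd by (simp add: weak_deriv_def)
  have "loc_int L (\<lambda>x. f x - G x)"
    unfolding loc_int_def
  proof (intro allI impI)
    fix a b :: real assume ab: "0 < a" "b < L"
    have "integrable (lebesgue_on {a..b}) G"
      by (rule continuous_imp_integrable_real, rule continuous_on_subset[OF G_cont]) (use ab in auto)
    then show "integrable (lebesgue_on {a..b}) (\<lambda>x. f x - G x)"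
      using f ab by (simp add: loc_int_def)
  qed
  moreover have "(\<integral>x. (f x - G x) * deriv \<phi> x \<partial>lebesgue_on {0..L}) = 0" if \<phi>: "test_fun L \<phi>" for \<phi>
  proof -
    obtain a b where \<phi>_smooth: "smooth_fun \<phi>" and ab: "0 < a" "b < L"
      and vanish: "\<And>x. x \<notin> {a..b} \<Longrightarrow> \<phi> x = 0" and d_vanish: "\<And>x. x \<notin> {a..b} \<Longrightarrow> deriv \<phi> x = 0"
      using \<phi> by (rule test_funE) blast
    have d\<phi>_cont: "continuous_on S (deriv \<phi>)" for S
      by (intro smooth_fun_continuous_on smooth_fun_deriv \<phi>_smooth)
    have int_f: "integrable (lebesgue_on {0..L}) (\<lambda>x. f x * deriv \<phi> x)"
      by (rule loc_int_mult_compact_support(2)[OF f ab d\<phi>_cont d_vanish])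
    have int_G: "integrable (lebesgue_on {0..L}) (\<lambda>x. G x * deriv \<phi> x)"
      by (intro continuous_imp_integrable_real continuous_on_mult G_cont d\<phi>_cont)
    have "(\<integral>x. f x * deriv \<phi> x \<partial>lebesgue_on {0..L}) = - (\<integral>x. g x * \<phi> x \<partial>lebesgue_on {0..L})"
      using wd \<phi> unfolding weak_deriv_def by blast
    also have "(\<integral>x. g x * \<phi> x \<partial>lebesgue_on {0..L}) = integral {0..L} (\<lambda>x. g x * \<phi> x)"
      using absolutely_integrable_mult_continuous[OF g smooth_fun_continuous_on[OF \<phi>_smooth]]
      by (simp add: lebesgue_integral_eq_integral integrable_lebesgue_on_iff)
    also have "\<dots> = G L * \<phi> L - integral {0..L} (\<lambda>x. G x * deriv \<phi> x)"
    proof -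
      have "(\<phi> has_real_derivative deriv \<phi> x) (at x within {0..L})" for x
        using smooth_fun_has_real_derivative[OF \<phi>_smooth] by (rule has_field_derivative_at_within)
      from integration_by_parts_primitive[OF _ g this d\<phi>_cont] L show ?thesis
        by (simp add: G_def primitive_def)
    qed
    also have "\<phi> L = 0" using vanish ab by auto
    finally show ?thesis
      using int_f int_G by (simp add: lebesgue_integral_eq_integral left_diff_distrib)
  qed
  ultimately obtain c where "AE x in lebesgue_on {0..L}. f x - G x = c"
    using du_bois_reymond[OF L] by blast
  then show ?thesis
    by (intro exI[of _ c]) (simp add: G_def primitive_def eventually_mono)
qed

lemma weak_deriv_AE_eq_primitive':
  assumes "L > 0" "weak_deriv L f f'" "g absolutely_integrable_on {0..L}"
    "AE x in lebesgue_on {0..L}. f' x = g x"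
  shows "\<exists>c. AE x in lebesgue_on {0..L}. f x = primitive c g x"
  using weak_deriv_AE_cong[OF assms(2,4) loc_int_if_absolutely_integrable[OF assms(3)]]
  by (rule weak_deriv_AE_eq_primitive[OF assms(1) _ assms(3)])

section \<open>The energy identity in \<open>H\<^sub>0\<^sup>2\<close>\<close>

lemma L2_integrable:
  assumes "L2 L h"
  shows "integrable (lebesgue_on {0..L}) h"
proof (rule Bochner_Integration.integrable_bound)
  show "integrable (lebesgue_on {0..L}) (\<lambda>x. 1 + (h x)^2)"
    using assms by (simp add: L2_def continuous_imp_integrable_real)
  show "h \<in> borel_measurable (lebesgue_on {0..L})" using assms by (simp add: L2_def)
  have "\<bar>h x\<bar> \<le> 1 + (h x)^2" for x
  proof -
    have "0 \<le> (\<bar>h x\<bar> - 1/2)^2 + 3/4" by simp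
    then show ?thesis by (simp add: power2_eq_square algebra_simps)
  qed
  then show "AE x in lebesgue_on {0..L}. norm (h x) \<le> norm (1 + (h x)^2)" by simp
qed

lemma L2_absolutely_integrable: "L2 L h \<Longrightarrow> h absolutely_integrable_on {0..L}"
  using L2_integrable integrable_lebesgue_on_iff by blast

lemma L2_integrable_mult:
  assumes f: "L2 L f" and g: "L2 L g"
  shows "integrable (lebesgue_on {0..L}) (\<lambda>x. f x * g x)"
proof (rule Bochner_Integration.integrable_bound)
  show "integrable (lebesgue_on {0..L}) (\<lambda>x. (f x)^2 + (g x)^2)"
    using f g by (simp add: L2_def)
  show "(\<lambda>x. f x * g x) \<in> borel_measurable (lebesgue_on {0..L})"
    using f g by (simp add: L2_def borel_measurable_times)
  have "\<bar>f x * g x\<bar> \<le> (f x)^2 + (g x)^2" for x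
  proof -
    have "0 \<le> (\<bar>f x\<bar> - \<bar>g x\<bar>)^2" by simp
    then have "2 * (\<bar>f x\<bar> * \<bar>g x\<bar>) \<le> (f x)^2 + (g x)^2"
      by (simp add: power2_eq_square algebra_simps)
    moreover have "0 \<le> \<bar>f x\<bar> * \<bar>g x\<bar>" by simp
    ultimately have "\<bar>f x\<bar> * \<bar>g x\<bar> \<le> (f x)^2 + (g x)^2" by linarith
    then show ?thesis by (simp add: abs_mult)
  qed
  then show "AE x in lebesgue_on {0..L}. norm (f x * g x) \<le> norm ((f x)^2 + (g x)^2)" by simp
qed

lemma H02_fourth_deriv_primitives:
  assumes L: "L > 0" and f: "is_H02 L f f1 f2" and f3: "weak_deriv L f2 f3"
    and f4: "weak_deriv L f3 f4" "L2 L f4"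
  obtains c0 c1 c2 c3 Y0 Y1 Y2 Y3 where
    "Y3 = primitive c3 f4" "Y2 = primitive c2 Y3" "Y1 = primitive c1 Y2" "Y0 = primitive c0 Y1"
    "AE x in lebesgue_on {0..L}. f x = Y0 x" "AE x in lebesgue_on {0..L}. f2 x = Y2 x"
    "Y0 0 = 0" "Y0 L = 0" "Y1 0 = 0" "Y1 L = 0"
proof -
  from f obtain G G1 where H2: "is_H2 L f f1 f2"
    and G_cont: "continuous_on {0..L} G" "continuous_on {0..L} G1"
    and G_ae: "AE x in lebesgue_on {0..L}. G x = f x" "AE x in lebesgue_on {0..L}. G1 x = f1 x"
    and G_boundary: "G 0 = 0" "G L = 0" "G1 0 = 0" "G1 L = 0"
    unfolding is_H02_def by blast
  then have f1: "weak_deriv L f f1" and f2: "weak_deriv L f1 f2"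
    unfolding is_H2_def by auto
  have f4_int: "f4 absolutely_integrable_on {0..L}" by (rule L2_absolutely_integrable[OF f4(2)])
  obtain c3 where ae3: "AE x in lebesgue_on {0..L}. f3 x = primitive c3 f4 x"
    using weak_deriv_AE_eq_primitive[OF L f4(1) f4_int] by blast
  define Y3 where "Y3 = primitive c3 f4"
  have Y3_cont: "continuous_on {0..L} Y3"
    unfolding Y3_def by (intro continuous_on_primitive set_lebesgue_integral_eq_integral(1) f4_int)
  obtain c2 where ae2: "AE x in lebesgue_on {0..L}. f2 x = primitive c2 Y3 x"
    using weak_deriv_AE_eq_primitive'[OF L f3 absolutely_integrable_continuous_real[OF Y3_cont]] ae3
    by (auto simp: Y3_def)
  define Y2 where "Y2 = primitive c2 Y3"
  have Y2_cont: "continuous_on {0..L} Y2"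
    unfolding Y2_def by (intro continuous_on_primitive integrable_continuous_interval Y3_cont)
  obtain c1 where ae1: "AE x in lebesgue_on {0..L}. f1 x = primitive c1 Y2 x"
    using weak_deriv_AE_eq_primitive'[OF L f2 absolutely_integrable_continuous_real[OF Y2_cont]] ae2
    by (auto simp: Y2_def)
  define Y1 where "Y1 = primitive c1 Y2"
  have Y1_cont: "continuous_on {0..L} Y1"
    unfolding Y1_def by (intro continuous_on_primitive integrable_continuous_interval Y2_cont)
  obtain c0 where ae0: "AE x in lebesgue_on {0..L}. f x = primitive c0 Y1 x"
    using weak_deriv_AE_eq_primitive'[OF L f1 absolutely_integrable_continuous_real[OF Y1_cont]] ae1
    by (auto simp: Y1_def)
  define Y0 where "Y0 = primitive c0 Y1"
  have Y0_cont: "continuous_on {0..L} Y0"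
    unfolding Y0_def by (intro continuous_on_primitive integrable_continuous_interval Y1_cont)
  have "AE x in lebesgue_on {0..L}. G x = Y0 x"
    using G_ae(1) ae0 by eventually_elim (simp add: Y0_def)
  then have G_Y0: "G x = Y0 x" if "x \<in> {0..L}" for x
    by (rule continuous_on_AE_eq[OF L G_cont(1) Y0_cont _ that])
  have "AE x in lebesgue_on {0..L}. G1 x = Y1 x"
    using G_ae(2) ae1 by eventually_elim (simp add: Y1_def)
  then have G1_Y1: "G1 x = Y1 x" if "x \<in> {0..L}" for x
    by (rule continuous_on_AE_eq[OF L G_cont(2) Y1_cont _ that])
  have "0 \<in> {0..L}" "L \<in> {0..L}" using L by auto
  then have "Y0 0 = 0" "Y0 L = 0" "Y1 0 = 0" "Y1 L = 0"
    using G_boundary G_Y0[of 0] G_Y0[of L] G1_Y1[of 0] G1_Y1[of L] by simp_all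
  with that[OF Y3_def Y2_def Y1_def Y0_def] ae0 ae2 show ?thesis
    by (simp add: Y0_def Y2_def)
qed

lemma ip_fourth_deriv_H02:
  assumes L: "L > 0" and f: "is_H02 L f f1 f2" and f3: "weak_deriv L f2 f3"
    and f4: "weak_deriv L f3 f4" "L2 L f4"
  shows "ip L f4 f = ip L f2 f2"
proof -
  obtain c0 c1 c2 c3 Y0 Y1 Y2 Y3 where
    Y: "Y3 = primitive c3 f4" "Y2 = primitive c2 Y3" "Y1 = primitive c1 Y2" "Y0 = primitive c0 Y1"
    and ae: "AE x in lebesgue_on {0..L}. f x = Y0 x" "AE x in lebesgue_on {0..L}. f2 x = Y2 x"
    and boundary: "Y0 0 = 0" "Y0 L = 0" "Y1 0 = 0" "Y1 L = 0"
    by (rule H02_fourth_deriv_primitives[OF assms])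
  have f4_int: "f4 absolutely_integrable_on {0..L}" by (rule L2_absolutely_integrable[OF f4(2)])
  have Y3_cont: "continuous_on {0..L} Y3"
    unfolding Y(1) by (intro continuous_on_primitive set_lebesgue_integral_eq_integral(1) f4_int)
  have Y2_cont: "continuous_on {0..L} Y2"
    unfolding Y(2) by (intro continuous_on_primitive integrable_continuous_interval Y3_cont)
  have Y1_cont: "continuous_on {0..L} Y1"
    unfolding Y(3) by (intro continuous_on_primitive integrable_continuous_interval Y2_cont)
  have Y0_cont: "continuous_on {0..L} Y0"
    unfolding Y(4) by (intro continuous_on_primitive integrable_continuous_interval Y1_cont)
  have f2: "L2 L f" "L2 L f2" using f by (auto simp: is_H02_def is_H2_def)
  have int_f4Y0: "integrable (lebesgue_on {0..L}) (\<lambda>x. f4 x * Y0 x)"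
    using absolutely_integrable_mult_continuous[OF f4_int Y0_cont] integrable_lebesgue_on_iff by blast
  have int_Y2Y2: "integrable (lebesgue_on {0..L}) (\<lambda>x. Y2 x * Y2 x)"
    by (intro continuous_imp_integrable_real continuous_on_mult Y2_cont)
  have "ip L f4 f = (\<integral>x. f4 x * Y0 x \<partial>lebesgue_on {0..L})"
    unfolding ip_def
  proof (rule integral_cong_AE)
    show "(\<lambda>x. f4 x * f x) \<in> borel_measurable (lebesgue_on {0..L})"
      using L2_integrable_mult[OF f4(2) f2(1)] by (rule borel_measurable_integrable)
    show "(\<lambda>x. f4 x * Y0 x) \<in> borel_measurable (lebesgue_on {0..L})"
      using int_f4Y0 by (rule borel_measurable_integrable)
    show "AE x in lebesgue_on {0..L}. f4 x * f x = f4 x * Y0 x"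
      using ae(1) by eventually_elim simp
  qed
  also have "\<dots> = integral {0..L} (\<lambda>x. f4 x * Y0 x)"
    using int_f4Y0 by (rule lebesgue_integral_eq_integral) simp
  also have "\<dots> = integral {0..L} (\<lambda>x. Y2 x * Y2 x)"
    by (rule integral_fourth_primitive_mult[OF _ f4_int Y boundary]) (use L in simp)
  also have "\<dots> = (\<integral>x. Y2 x * Y2 x \<partial>lebesgue_on {0..L})"
    using int_Y2Y2 by (rule lebesgue_integral_eq_integral[symmetric]) simp
  also have "\<dots> = ip L f2 f2"
    unfolding ip_def
  proof (rule integral_cong_AE)
    show "(\<lambda>x. Y2 x * Y2 x) \<in> borel_measurable (lebesgue_on {0..L})"
      using int_Y2Y2 by (rule borel_measurable_integrable)
    show "(\<lambda>x. f2 x * f2 x) \<in> borel_measurable (lebesgue_on {0..L})"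
      using L2_integrable_mult[OF f2(2) f2(2)] by (rule borel_measurable_integrable)
    show "AE x in lebesgue_on {0..L}. Y2 x * Y2 x = f2 x * f2 x"
      using ae(2) by eventually_elim simp
  qed
  finally show ?thesis .
qed

section \<open>Unconditional stability of the L1 scheme\<close>

lemma le_sqrt_mult_if_quadratic_nonneg:
  fixes A B P :: real
  assumes q: "\<And>t. 0 \<le> A - 2 * t * P + t^2 * B" and A: "A \<ge> 0" and B: "B \<ge> 0"
  shows "P \<le> sqrt A * sqrt B"
proof -
  have "P^2 \<le> A * B"
  proof (cases "B = 0")
    case True
    have "P = 0"
    proof (rule ccontr)
      assume "P \<noteq> 0"
      then have "0 \<le> A - 2 * ((A+1)/(2*P)) * P" using q[of "(A+1)/(2*P)"] True by simp
      then show False using \<open>P \<noteq> 0\<close> by (simp add: field_simps)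
    qed
    then show ?thesis using A B by simp
  next
    case False
    then have "B > 0" using B by simp
    moreover have "0 \<le> A - 2 * (P/B) * P + (P/B)^2 * B" by (rule q)
    ultimately show ?thesis by (simp add: power2_eq_square field_simps)
  qed
  then have "sqrt (P^2) \<le> sqrt (A * B)" by (rule real_sqrt_le_mono)
  then show ?thesis by (simp add: real_sqrt_mult)
qed

lemma ip_self_nonneg: "ip L f f \<ge> 0"
  unfolding ip_def by (rule Bochner_Integration.integral_nonneg) simp

lemma norm0_nonneg: "norm0 L f \<ge> 0"
  by (simp add: norm0_def ip_self_nonneg)

lemma norm0_sq: "(norm0 L f)^2 = ip L f f"
  by (simp add: norm0_def ip_self_nonneg)

lemma ip_le_norm0_mult:
  assumes f: "L2 L f" and g: "L2 L g"
  shows "ip L f g \<le> norm0 L f * norm0 L g"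
  unfolding norm0_def
proof (rule le_sqrt_mult_if_quadratic_nonneg[OF _ ip_self_nonneg ip_self_nonneg])
  fix t :: real
  have "0 \<le> (\<integral>x. (f x - t * g x) * (f x - t * g x) \<partial>lebesgue_on {0..L})"
    by (rule Bochner_Integration.integral_nonneg) simp
  also have "\<dots> = (\<integral>x. f x * f x - (2 * t) * (f x * g x) + t^2 * (g x * g x) \<partial>lebesgue_on {0..L})"
    by (rule Bochner_Integration.integral_cong) (auto simp: algebra_simps power2_eq_square)
  also have "\<dots> = ip L f f - 2 * t * ip L f g + t^2 * ip L g g"
    using L2_integrable_mult[OF f f] L2_integrable_mult[OF f g] L2_integrable_mult[OF g g]
    by (simp add: ip_def)
  finally show "0 \<le> ip L f f - 2 * t * ip L f g + t^2 * ip L g g" .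
qed

lemma norm0_le_norm2: "0 \<le> \<beta> * \<alpha> \<Longrightarrow> norm0 L f \<le> norm2 L \<beta> \<alpha> f f2"
proof -
  assume "0 \<le> \<beta> * \<alpha>"
  then have "sqrt ((norm0 L f)^2) \<le> norm2 L \<beta> \<alpha> f f2"
    unfolding norm2_def by (intro real_sqrt_le_mono) simp
  then show ?thesis using norm0_nonneg[of L f] by simp
qed

lemma energy_eq_norm2_sq:
  assumes "L > 0" "0 \<le> \<beta> * \<alpha>" "is_H02 L f f1 f2" "weak_deriv L f2 f3" "weak_deriv L f3 f4" "L2 L f4"
  shows "ip L f f + \<beta> * \<alpha> * ip L f4 f = (norm2 L \<beta> \<alpha> f f2)^2"
  using ip_fourth_deriv_H02[OF assms(1,3-6)] assms(2)
  by (simp add: norm2_def norm0_sq ip_self_nonneg)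

lemma norm2_le_if_energy_le:
  assumes "L > 0" "0 \<le> \<beta> * \<alpha>" "is_H02 L f f1 f2" "weak_deriv L f2 f3" "weak_deriv L f3 f4" "L2 L f4"
    and energy: "ip L f f + \<beta> * \<alpha> * ip L f4 f \<le> R * norm0 L f" and R: "0 \<le> R"
  shows "norm2 L \<beta> \<alpha> f f2 \<le> R"
proof -
  define N where "N = norm2 L \<beta> \<alpha> f f2"
  have "N * N = ip L f f + \<beta> * \<alpha> * ip L f4 f"
    using energy_eq_norm2_sq[OF assms(1-6)] by (simp add: N_def power2_eq_square)
  also have "\<dots> \<le> R * norm0 L f" by (rule energy)
  also have "\<dots> \<le> R * N" unfolding N_def by (intro mult_left_mono norm0_le_norm2 assms(2) R)
  finally have "N * N \<le> R * N" .
  moreover have "0 \<le> N" using assms(2) by (simp add: N_def norm2_def)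
  ultimately show ?thesis unfolding N_def[symmetric]
    by (cases "N = 0") (use R in auto)
qed

definition L1_weight :: "real \<Rightarrow> nat \<Rightarrow> real" where
  "L1_weight s j = (real j + 1) powr s - real j powr s"

lemma L1_weight_nonneg: "0 \<le> s \<Longrightarrow> 0 \<le> L1_weight s j"
  unfolding L1_weight_def using powr_mono2[of s "real j" "real j + 1"] by simp

text \<open>Monotonicity of the weights is concavity of \<open>x \<mapsto> x powr s\<close>.\<close>

lemma L1_weight_Suc_le:
  assumes s: "0 < s" "s < 1"
  shows "L1_weight s (Suc j) \<le> L1_weight s j"
proof (cases j)
  case 0
  have "2 powr s \<le> (2::real) powr 1" by (rule powr_mono) (use s in auto)
  then show ?thesis using 0 by (simp add: L1_weight_def)
next
  case (Suc i)
  define h where "h x = (x + 1) powr s - x powr s" for x :: real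
  have "h (real j + 1) \<le> h (real j)"
  proof (rule DERIV_nonpos_imp_nonincreasing[of "real j" "real j + 1" h])
    fix x assume x: "real j \<le> x" "x \<le> real j + 1"
    then have x_pos: "x > 0" using Suc by simp
    have "(h has_real_derivative s * (x + 1) powr (s - 1) - s * x powr (s - 1)) (at x)"
      unfolding h_def[abs_def] using x_pos
      by (auto intro!: derivative_eq_intros DERIV_chain2[OF has_real_derivative_powr])
    moreover have "(x + 1) powr (s - 1) \<le> x powr (s - 1)"
      by (rule powr_mono2') (use x_pos s in auto)
    then have "s * (x + 1) powr (s - 1) - s * x powr (s - 1) \<le> 0"
      using s by (simp add: mult_left_mono)
    ultimately show "\<exists>y. (h has_real_derivative y) (at x) \<and> y \<le> 0" by blast
  qed simp
  then show ?thesis by (simp add: h_def L1_weight_def add.commute add.left_commute)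
qed

lemma L1_weight_le_1:
  assumes "0 < s" "s < 1"
  shows "L1_weight s j \<le> 1"
proof (induction j)
  case 0
  then show ?case by (simp add: L1_weight_def)
next
  case (Suc j)
  then show ?case using L1_weight_Suc_le[OF assms, of j] by simp
qed

lemma L1_history_le:
  fixes b c :: "nat \<Rightarrow> real"
  assumes p: "1 \<le> p" and b: "b 1 \<le> 1" "\<And>j. 0 \<le> b j" "\<And>j. b (Suc j) \<le> b j"
    and c: "\<And>k. k \<le> p \<Longrightarrow> c k \<le> M"
  shows "(1 - b 1) * c p + (\<Sum>j=1..p-1. (b j - b (j+1)) * c (p-j)) + b p * c 0 \<le> M"
proof -
  have "(\<Sum>j=1..p-1. (b j - b (j+1)) * c (p-j)) \<le> (\<Sum>j=1..p-1. (b j - b (j+1)) * M)"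
    using b(3) c by (intro sum_mono mult_left_mono) auto
  also have "\<dots> = (\<Sum>j=1..p-1. b j - b (j+1)) * M"
    by (simp add: sum_distrib_right)
  also have "(\<Sum>j=1..p-1. b j - b (j+1)) = b 1 - b p"
    using sum_Suc_diff[of 1 "p - 1" b] p by (simp add: sum_subtractf)
  finally have "(\<Sum>j=1..p-1. (b j - b (j+1)) * c (p-j)) \<le> (b 1 - b p) * M" .
  moreover have "(1 - b 1) * c p \<le> (1 - b 1) * M" using b(1) c[of p] by (intro mult_left_mono) auto
  moreover have "b p * c 0 \<le> b p * M" using b(2) c[of 0] by (intro mult_left_mono) auto
  ultimately show ?thesis by (simp add: algebra_simps)
qed

lemma L1_scheme_stable:
  fixes L \<alpha> \<beta> :: real and K n :: nat and b :: "nat \<Rightarrow> real"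
    and y y1 y2 y3 y4 u :: "nat \<Rightarrow> real \<Rightarrow> real"
  assumes L: "L > 0" and \<beta>: "0 \<le> \<beta>" and \<alpha>: "0 \<le> \<alpha>"
    and b: "b 1 \<le> 1" "\<And>j. 0 \<le> b j" "\<And>j. b (Suc j) \<le> b j"
    and y0: "L2 L (y 0)" and u: "\<And>j. j \<in> {1..K} \<Longrightarrow> L2 L (u j)"
    and y: "\<And>j. j \<in> {1..K} \<Longrightarrow> is_H02 L (y j) (y1 j) (y2 j) \<and> weak_deriv L (y2 j) (y3 j)
                              \<and> weak_deriv L (y3 j) (y4 j) \<and> L2 L (y4 j)"
    and first: "\<And>g. g \<in> H02 L \<Longrightarrow>
           ip L (y 1) g + \<beta> * \<alpha> * ip L (y4 1) g = ip L (y 0) g + \<beta> * ip L (u 1) g"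
    and step: "\<And>p g. p \<in> {1..K-1} \<Longrightarrow> g \<in> H02 L \<Longrightarrow>
           ip L (y (p+1)) g + \<beta> * \<alpha> * ip L (y4 (p+1)) g =
             (1 - b 1) * ip L (y p) g + (\<Sum>j=1..p-1. (b j - b (j+1)) * ip L (y (p-j)) g)
             + b p * ip L (y 0) g + \<beta> * ip L (u (p+1)) g"
    and n: "1 \<le> n" "n \<le> K"
  shows "norm2 L \<beta> \<alpha> (y n) (y2 n) \<le> norm0 L (y 0) + \<beta> * (\<Sum>j=1..n. norm0 L (u j))"
  using n
proof (induction n rule: less_induct)
  case (less n)
  define R where "R m = norm0 L (y 0) + \<beta> * (\<Sum>j=1..m. norm0 L (u j))" for m
  have R_mono: "R m \<le> R m'" if "m \<le> m'" for m m'
    using that \<beta> by (simp add: R_def mult_left_mono sum_mono2 norm0_nonneg)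
  have y0_le_R: "norm0 L (y 0) \<le> R m" for m
    using R_mono[of 0 m] by (simp add: R_def)
  have \<beta>\<alpha>: "0 \<le> \<beta> * \<alpha>" using \<beta> \<alpha> by simp
  have yn: "is_H02 L (y n) (y1 n) (y2 n)" "weak_deriv L (y2 n) (y3 n)"
    "weak_deriv L (y3 n) (y4 n)" "L2 L (y4 n)"
    using y less.prems by auto
  then have yn_H02: "y n \<in> H02 L" and yn_L2: "L2 L (y n)"
    by (auto simp: H02_def is_H02_def is_H2_def)
  have "ip L (u n) (y n) \<le> norm0 L (u n) * norm0 L (y n)"
    using ip_le_norm0_mult[OF u yn_L2, of n] less.prems by simp
  from mult_left_mono[OF this \<beta>]
  have ip_u: "\<beta> * ip L (u n) (y n) \<le> \<beta> * norm0 L (u n) * norm0 L (y n)"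
    by (simp add: mult.assoc)
  have "ip L (y n) (y n) + \<beta> * \<alpha> * ip L (y4 n) (y n) \<le> R n * norm0 L (y n)"
  proof (cases "n = 1")
    case True
    have "ip L (y 0) (y n) \<le> norm0 L (y 0) * norm0 L (y n)" by (rule ip_le_norm0_mult[OF y0 yn_L2])
    then show ?thesis using first[OF yn_H02] ip_u True by (simp add: R_def algebra_simps)
  next
    case False
    define p where "p = n - 1"
    have p: "1 \<le> p" "n = p + 1" "p \<in> {1..K-1}" using False less.prems by (auto simp: p_def)
    have "ip L (y k) (y n) \<le> R p * norm0 L (y n)" if "k \<le> p" for k
    proof -
      have yk: "L2 L (y k) \<and> norm0 L (y k) \<le> R p"
      proof (cases "k = 0")
        case True
        then show ?thesis using y0 y0_le_R by simp
      next
        case False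
        then have "L2 L (y k)" using y[of k] that p less.prems by (auto simp: is_H02_def is_H2_def)
        moreover have "norm2 L \<beta> \<alpha> (y k) (y2 k) \<le> R k"
          using less.IH[of k] False that p less.prems by (simp add: R_def)
        then have "norm0 L (y k) \<le> R p"
          using norm0_le_norm2[OF \<beta>\<alpha>, of L "y k" "y2 k"] R_mono[OF that] by linarith
        ultimately show ?thesis by blast
      qed
      then have "ip L (y k) (y n) \<le> norm0 L (y k) * norm0 L (y n)"
        using ip_le_norm0_mult yn_L2 by blast
      also have "\<dots> \<le> R p * norm0 L (y n)" using yk norm0_nonneg by (simp add: mult_right_mono)
      finally show ?thesis .
    qed
    then have "(1 - b 1) * ip L (y p) (y n) + (\<Sum>j=1..p-1. (b j - b (j+1)) * ip L (y (p-j)) (y n))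
        + b p * ip L (y 0) (y n) \<le> R p * norm0 L (y n)"
      by (intro L1_history_le p(1) b)
    moreover have "R n = R p + \<beta> * norm0 L (u n)" using p(2) by (simp add: R_def algebra_simps)
    ultimately show ?thesis using step[OF p(3) yn_H02] ip_u p(2) by (simp add: algebra_simps)
  qed
  moreover have "0 \<le> R n" using y0_le_R[of n] norm0_nonneg[of L "y 0"] by linarith
  ultimately show ?case unfolding R_def by (rule norm2_le_if_energy_le[OF L \<beta>\<alpha> yn])
qed

theorem theorem1:
  fixes L \<gamma> \<alpha> \<Delta>t \<beta> :: real and K :: nat and b :: "nat \<Rightarrow> real"
    and y y1 y2 y3 y4 u :: "nat \<Rightarrow> real \<Rightarrow> real"
  assumes "L > 0" and "0 < \<gamma>" and "\<gamma> < 1" and "\<alpha> > 0" and "K \<ge> 1" and "\<Delta>t > 0"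
    and \<beta>_def: "\<beta> = Gamma (2 - \<gamma>) * \<Delta>t powr \<gamma>"
    and b_def: "\<And>j. b j = (real j + 1) powr (1 - \<gamma>) - (real j) powr (1 - \<gamma>)"
    and "L2 L (y 0)"
    and "\<And>j. j \<in> {1..K} \<Longrightarrow> L2 L (u j)"
    and "\<And>j. j \<in> {1..K} \<Longrightarrow> is_H02 L (y j) (y1 j) (y2 j) \<and> weak_deriv L (y2 j) (y3 j)
                              \<and> weak_deriv L (y3 j) (y4 j) \<and> L2 L (y4 j)"
    and "\<And>g. g \<in> H02 L \<Longrightarrow>
           ip L (y 1) g + \<beta> * \<alpha> * ip L (y4 1) g = ip L (y 0) g + \<beta> * ip L (u 1) g"
    and "\<And>p g. p \<in> {1..K-1} \<Longrightarrow> g \<in> H02 L \<Longrightarrow>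
           ip L (y (p+1)) g + \<beta> * \<alpha> * ip L (y4 (p+1)) g =
             (1 - b 1) * ip L (y p) g + (\<Sum>j=1..p-1. (b j - b (j+1)) * ip L (y (p-j)) g)
             + b p * ip L (y 0) g + \<beta> * ip L (u (p+1)) g"
  shows "\<forall>p < K. norm2 L \<beta> \<alpha> (y (p+1)) (y2 (p+1))
                  \<le> norm0 L (y 0) + \<beta> * (\<Sum>j=1..p+1. norm0 L (u j))"
proof (intro allI impI)
  fix p assume "p < K"
  have "b = L1_weight (1 - \<gamma>)" by (simp add: b_def L1_weight_def fun_eq_iff)
  moreover have "0 < 1 - \<gamma>" "1 - \<gamma> < 1" using assms(2,3) by simp_all
  ultimately have b: "b 1 \<le> 1" "\<And>j. 0 \<le> b j" "\<And>j. b (Suc j) \<le> b j"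
    by (simp_all add: L1_weight_le_1 L1_weight_nonneg L1_weight_Suc_le)
  have "\<beta> > 0" unfolding \<beta>_def using assms(2,3,6) by (simp add: Gamma_real_pos)
  then show "norm2 L \<beta> \<alpha> (y (p+1)) (y2 (p+1)) \<le> norm0 L (y 0) + \<beta> * (\<Sum>j=1..p+1. norm0 L (u j))"
    using L1_scheme_stable[OF assms(1) _ _ b assms(9-13), where K = K and n = "p + 1"] \<open>p < K\<close> assms(4) by simp
qed

end
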